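(* Let $n\in\mathbb N$, let $K_1,\dots,K_n$ be singular kernel functions satisfying (PM$_c$) for some $c>0$, and let $J$ be an arbitrary $n$-field function. Then for each $\mathbf y\in Y$ there are an open neighbourhood $U\subseteq Y$ of $\mathbf y$ and an open neighbourhood $V$ of $\Phi(\mathbf y)$ such that $\Phi:U\to V$ is a bi-Lipschitz homeomorphism.
   Context: A kernel function is a function $K:(-1,0)\cup(0,1)\to\mathbb R$ that is concave on $(-1,0)$ and concave on $(0,1)$ and satisfies $\lim_{t\downarrow0}K(t)=\lim_{t\uparrow0}K(t)$. It is extended to $[-1,1]$ with values in $[-\infty,\infty)$ by its one-sided limits at $-1,0,1$. A kernel function is singular if $K(0)=-\infty$. For $c\ge0$, a kernel function satisfies (PM$_c$) if $K'(t)-K'(t-1)\ge c$ for almost every $t\in(0,1)$. An $n$-field function is a function $J:[0,1]\to[-\infty,\infty)$ that is bounded above and whose set of finite values has total weight strictly greater than $n$. Here the points $0$ and $1$ each have weight $1/2$ and every point of $(0,1)$ has weight $1$. $S=\{\mathbf y\in\mathbb R^n:0<y_1<\dots<y_n<1\}$. $F(\mathbf y,t)=J(t)+\sum_{i=1}^nK_i(t-y_i)$, with the convention $a+(-\infty)=-\infty$. Set $y_0:=0$ and $y_{n+1}:=1$. Let $I_j(\mathbf y)=[y_j,y_{j+1}]$ and $m_j(\mathbf y)=\sup_{t\in I_j(\mathbf y)}F(\mathbf y,t)$. $Y=\{\mathbf y\in S:m_j(\mathbf y)\neq-\infty\ \forall j\}$. $\Phi(\mathbf y)=(m_1(\mathbf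 y)-m_0(\mathbf y),\dots,m_n(\mathbf y)-m_{n-1}(\mathbf y))$. *)

theory Defs
  imports "HOL-Analysis.Analysis" "HOL-Library.Extended_Real"
begin

text \<open>Kernel functions are given by their values on (-1,0) and (0,1) (a real-valued
function on the reals whose values elsewhere are ignored); the extension to [-1,1]
with values in [-infinity, infinity) is by one-sided limits (in ereal).\<close>

definition kernel_function :: "(real \<Rightarrow> real) \<Rightarrow> bool" where
  "kernel_function K \<longleftrightarrow>
     concave_on {-1<..<0} K \<and> concave_on {0<..<1} K \<and>
     (\<exists>l::ereal. ((\<lambda>s. ereal (K s)) \<longlongrightarrow> l) (at_right 0) \<and>
                 ((\<lambda>s. ereal (K s)) \<longlongrightarrow> l) (at_left 0))"

definition Kext :: "(real \<Rightarrow> real) \<Rightarrow> real \<Rightarrow> ereal" where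
  "Kext K t =
     (if t \<in> {-1<..<0} \<union> {0<..<1} then ereal (K t)
      else if t = 0 then Lim (at_right 0) (\<lambda>s. ereal (K s))
      else if t = 1 then Lim (at_left 1) (\<lambda>s. ereal (K s))
      else if t = -1 then Lim (at_right (-1)) (\<lambda>s. ereal (K s))
      else -\<infinity>)"

definition singular_kernel :: "(real \<Rightarrow> real) \<Rightarrow> bool" where
  "singular_kernel K \<longleftrightarrow> kernel_function K \<and> Kext K 0 = -\<infinity>"

definition PM :: "real \<Rightarrow> (real \<Rightarrow> real) \<Rightarrow> bool" where
  "PM c K \<longleftrightarrow>
     (AE t in lborel. t \<in> {0<..<1} \<longrightarrow>
        (\<exists>d1 d2. (K has_real_derivative d1) (at t) \<and>
                 (K has_real_derivative d2) (at (t - 1)) \<and> d1 - d2 \<ge> c))"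

definition weight :: "real set \<Rightarrow> ereal" where
  "weight A =
     (if finite A then
        ereal (real (card (A \<inter> {0<..<1})) + (if 0 \<in> A then 1/2 else 0) + (if 1 \<in> A then 1/2 else 0))
      else \<infinity>)"

definition n_field :: "nat \<Rightarrow> (real \<Rightarrow> ereal) \<Rightarrow> bool" where
  "n_field n J \<longleftrightarrow>
     (\<exists>M::real. \<forall>t\<in>{0..1}. J t \<le> ereal M) \<and>
     weight {t \<in> {0..1}. J t \<noteq> -\<infinity>} > ereal (real n)"

text \<open>Points of R^n are indexed by a finite linearly ordered type 'n with n = CARD('n);
the j-th coordinate (1-based) is the one at the (j-1)-th index in increasing order.\<close>

definition idx :: "nat \<Rightarrow> 'n::{finite,linorder}" where
  "idx j = sorted_list_of_set (UNIV :: 'n set) ! j"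

definition pos :: "'n::{finite,linorder} \<Rightarrow> nat" where
  "pos i = card {k. k < i}"

definition S_set :: "(real ^ 'n::{finite,linorder}) set" where
  "S_set = {y. (\<forall>i. 0 < y $ i \<and> y $ i < 1) \<and> (\<forall>i j. i < j \<longrightarrow> y $ i < y $ j)}"

definition yext :: "real ^ 'n::{finite,linorder} \<Rightarrow> nat \<Rightarrow> real" where
  "yext y j = (if j = 0 then 0 else if j \<le> CARD('n) then y $ idx (j - 1) else 1)"

definition Ffun :: "(real \<Rightarrow> ereal) \<Rightarrow> ('n::{finite,linorder} \<Rightarrow> real \<Rightarrow> real)
                     \<Rightarrow> real ^ 'n::{finite,linorder} \<Rightarrow> real \<Rightarrow> ereal" where
  "Ffun J K y t = J t + (\<Sum>i\<in>UNIV. Kext (K i) (t - y $ i))"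

definition mval :: "(real \<Rightarrow> ereal) \<Rightarrow> ('n::{finite,linorder} \<Rightarrow> real \<Rightarrow> real)
                     \<Rightarrow> real ^ 'n::{finite,linorder} \<Rightarrow> nat \<Rightarrow> ereal" where
  "mval J K y j = (SUP t\<in>{yext y j .. yext y (j + 1)}. Ffun J K y t)"

definition Y_set :: "(real \<Rightarrow> ereal) \<Rightarrow> ('n::{finite,linorder} \<Rightarrow> real \<Rightarrow> real)
                     \<Rightarrow> (real ^ 'n::{finite,linorder}) set" where
  "Y_set J K = {y \<in> S_set. \<forall>j \<le> CARD('n). mval J K y j \<noteq> -\<infinity>}"

text \<open>Phi_j = m_j - m_{j-1}; the coordinate with index i is the (pos i + 1)-th.\<close>
definition Phi :: "(real \<Rightarrow> ereal) \<Rightarrow> ('n::{finite,linorder} \<Rightarrow> real \<Rightarrow> real)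
                     \<Rightarrow> real ^ 'n::{finite,linorder} \<Rightarrow> real ^ 'n::{finite,linorder}" where
  "Phi J K y = (\<chi> i. real_of_ereal (mval J K y (pos i + 1) - mval J K y (pos i)))"

end

theory Submission
  imports Defs "HOL-Homology.Invariance_of_Domain"
begin

text \<open>
  Because the kernels are singular, near \<open>y\<close> every approximate maximiser of \<open>F(a,\<cdot>)\<close> on
  \<open>I\<^sub>j(a)\<close> stays a fixed distance away from all poles \<open>a\<^sub>i\<close>. Comparing near-maximisers of
  \<open>F(a,\<cdot>)\<close> and \<open>F(b,\<cdot>)\<close> and using the intermediate value theorem, \<open>m\<^sub>j(b) - m\<^sub>j(a)\<close> equals, up to any
  \<open>\<epsilon>\<close>, the value of \<open>D(t) = \<Sum>\<^sub>i K\<^sub>i(t - b\<^sub>i) - K\<^sub>i(t - a\<^sub>i)\<close> at some \<open>t\<close> in a fixed window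
  between consecutive poles. As the \<open>K\<^sub>i\<close> are Lipschitz away from 0, \<open>\<Phi>\<close> is Lipschitz.
  For the converse, weight the components of \<open>\<Phi>(b) - \<Phi>(a)\<close> by \<open>-sgn(b\<^sub>i - a\<^sub>i)\<close>: for each kernel
  \<open>K\<^sub>l\<close>, concavity fixes the sign of the increments of \<open>t \<mapsto> K\<^sub>l(t - b\<^sub>l) - K\<^sub>l(t - a\<^sub>l)\<close>
  between windows on the same side of its pole, while (PM_c) makes the total increment across the
  pole at least \<open>c |b\<^sub>l - a\<^sub>l|\<close> in the opposite direction. Hence \<open>c \<parallel>b - a\<parallel>\<^sub>1 \<le> \<parallel>\<Phi>(b) - \<Phi>(a)\<parallel>\<^sub>1\<close>, \<open>\<Phi>\<close> is bi-Lipschitz on a ball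
  around \<open>y\<close>, and invariance of domain makes its image open.
\<close>

section \<open>Concave functions of a real variable\<close>

lemma concave_on_slope_antimono:
  fixes K :: "real \<Rightarrow> real"
  assumes cc: "concave_on I K"
    and I: "x1 \<in> I" "x2 \<in> I" "x1' \<in> I" "x2' \<in> I"
    and lt: "x1 < x2" "x1' < x2'" and le: "x1 \<le> x1'" "x2 \<le> x2'"
  shows "(K x2' - K x1') / (x2' - x1') \<le> (K x2 - K x1) / (x2 - x1)"
proof -
  have cv: "convex_on I (\<lambda>x. - K x)" using cc by (simp add: concave_on_def)
  have flip: "(- K u - - K v) / (u - v) = - ((K v - K u) / (v - u))" for u v
    by (simp add: divide_minus_right[symmetric])
  have "(K x2' - K x1) / (x2' - x1) \<le> (K x2 - K x1) / (x2 - x1)"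
  proof (cases "x2 = x2'")
    case False
    with le have "x2 < x2'" by auto
    from convex_on_slope_le(1)[OF cv I(1) I(4) lt(1) this] show ?thesis unfolding flip by simp
  qed simp
  moreover have "(K x2' - K x1') / (x2' - x1') \<le> (K x2' - K x1) / (x2' - x1)"
  proof (cases "x1 = x1'")
    case False
    with le have "x1 < x1'" by auto
    from convex_on_slope_le(2)[OF cv I(1) I(4) this lt(2)] show ?thesis unfolding flip by simp
  qed simp
  ultimately show ?thesis by linarith
qed

lemma concave_on_increment_antimono:
  fixes K :: "real \<Rightarrow> real"
  assumes cc: "concave_on I K" and h: "h > 0" and uu: "u \<le> u'"
    and I: "u \<in> I" "u + h \<in> I" "u' \<in> I" "u' + h \<in> I"
  shows "K (u' + h) - K u' \<le> K (u + h) - K u"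
proof -
  have "(K (u' + h) - K u') / (u' + h - u') \<le> (K (u + h) - K u) / (u + h - u)"
    by (rule concave_on_slope_antimono[OF cc I(1,2,3,4)]) (use h uu in auto)
  then show ?thesis using h by (simp add: divide_le_cancel)
qed

lemma concave_on_bdd_above_open_interval:
  fixes K :: "real \<Rightarrow> real"
  assumes cc: "concave_on {p<..<q} K" and pq: "p < q"
  shows "\<exists>M. \<forall>t\<in>{p<..<q}. K t \<le> M"
proof -
  define m0 m m3 where "m0 = (3*p + q)/4" and "m = (p + q)/2" and "m3 = (p + 3*q)/4"
  have mm: "m0 \<in> {p<..<q}" "m \<in> {p<..<q}" "m3 \<in> {p<..<q}" "m0 < m" "m < m3"
    using pq by (auto simp: m0_def m_def m3_def)
  define A B where "A = (K m - K m0) / (m - m0)" and "B = (K m3 - K m) / (m3 - m)"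
  have "K t \<le> \<bar>K m\<bar> + (\<bar>A\<bar> + \<bar>B\<bar>) * (q - p)" if t: "t \<in> {p<..<q}" for t
  proof (cases t m rule: linorder_cases)
    case less
    have "(K m3 - K m) / (m3 - m) \<le> (K m - K t) / (m - t)"
      by (rule concave_on_slope_antimono[OF cc]) (use mm t less in auto)
    then have "B * (m - t) \<le> K m - K t" using less by (simp add: B_def le_divide_eq)
    moreover have "\<bar>B * (m - t)\<bar> \<le> \<bar>B\<bar> * (q - p)"
      using t less mm by (simp add: abs_mult mult_left_mono)
    moreover have "0 \<le> \<bar>A\<bar> * (q - p)" using pq by auto
    ultimately show ?thesis
      using abs_ge_minus_self[of "B * (m - t)"] abs_ge_self[of "K m"] unfolding distrib_right by linarith
  next
    case greater
    have "(K t - K m) / (t - m) \<le> (K m - K m0) / (m - m0)"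
      by (rule concave_on_slope_antimono[OF cc]) (use mm t greater in auto)
    then have "K t - K m \<le> A * (t - m)" using greater by (simp add: A_def divide_le_eq)
    moreover have "\<bar>A * (t - m)\<bar> \<le> \<bar>A\<bar> * (q - p)"
      using t greater mm by (simp add: abs_mult mult_left_mono)
    moreover have "0 \<le> \<bar>B\<bar> * (q - p)" using pq by auto
    ultimately show ?thesis
      using abs_ge_self[of "A * (t - m)"] abs_ge_self[of "K m"] unfolding distrib_right by linarith
  next
    case equal
    have "0 \<le> (\<bar>A\<bar> + \<bar>B\<bar>) * (q - p)" using pq by simp
    then show ?thesis unfolding equal using abs_ge_self[of "K m"] by linarith
  qed
  then show ?thesis by blast
qed

lemma concave_on_lipschitz_on_compact:
  fixes K :: "real \<Rightarrow> real"
  assumes cc: "concave_on {p<..<q} K" and a: "p < \<alpha>" and b: "\<beta> < q"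
  shows "\<exists>L. L-lipschitz_on {\<alpha>..\<beta>} K"
proof (cases "\<alpha> \<le> \<beta>")
  case False
  then have "{\<alpha>..\<beta>} = {}" by simp
  then have "0-lipschitz_on {\<alpha>..\<beta>} K" by (simp add: lipschitz_on_def)
  then show ?thesis ..
next
  case True
  define p' q' where "p' = (p + \<alpha>)/2" and "q' = (\<beta> + q)/2"
  have pp: "p < p'" "p' < \<alpha>" "\<beta> < q'" "q' < q" using a b by (auto simp: p'_def q'_def)
  define A B where "A = (K \<alpha> - K p') / (\<alpha> - p')" and "B = (K q' - K \<beta>) / (q' - \<beta>)"
  have slope: "\<bar>K x' - K x\<bar> \<le> (\<bar>A\<bar> + \<bar>B\<bar>) * \<bar>x' - x\<bar>"
    if x: "\<alpha> \<le> x" "x < x'" "x' \<le> \<beta>" for x x'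
  proof -
    have "(K x' - K x) / (x' - x) \<le> (K x - K p') / (x - p')"
      by (rule concave_on_slope_antimono[OF cc]) (use pp x True in auto)
    also have "\<dots> \<le> A" unfolding A_def
      by (rule concave_on_slope_antimono[OF cc]) (use pp x True in auto)
    finally have s1: "(K x' - K x) / (x' - x) \<le> A" .
    have "B \<le> (K q' - K x') / (q' - x')" unfolding B_def
      by (rule concave_on_slope_antimono[OF cc]) (use pp x True in auto)
    also have "\<dots> \<le> (K x' - K x) / (x' - x)"
      by (rule concave_on_slope_antimono[OF cc]) (use pp x True in auto)
    finally have s2: "B \<le> (K x' - K x) / (x' - x)" .
    have "\<bar>(K x' - K x) / (x' - x)\<bar> \<le> \<bar>A\<bar> + \<bar>B\<bar>" using s1 s2 by linarith
    then have "\<bar>K x' - K x\<bar> / \<bar>x' - x\<bar> \<le> \<bar>A\<bar> + \<bar>B\<bar>" by (simp add: abs_divide)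
    then show ?thesis using x by (simp add: divide_le_eq)
  qed
  have "(\<bar>A\<bar> + \<bar>B\<bar>)-lipschitz_on {\<alpha>..\<beta>} K"
  proof (rule lipschitz_onI)
    fix x x' assume xx: "x \<in> {\<alpha>..\<beta>}" "x' \<in> {\<alpha>..\<beta>}"
    show "dist (K x) (K x') \<le> (\<bar>A\<bar> + \<bar>B\<bar>) * dist x x'"
    proof (cases x x' rule: linorder_cases)
      case less
      then show ?thesis using slope[of x x'] xx by (simp add: dist_real_def abs_minus_commute)
    next
      case greater
      then show ?thesis using slope[of x' x] xx by (simp add: dist_real_def)
    qed simp
  qed simp
  then show ?thesis ..
qed

lemma concave_on_le_tangent:
  fixes K :: "real \<Rightarrow> real"
  assumes cc: "concave_on I K" and I: "connected I" "z \<in> interior I" "x \<in> I"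
    and d: "(K has_real_derivative d) (at z)"
  shows "K x \<le> K z + d * (x - z)"
proof -
  have cv: "convex_on I (\<lambda>x. - K x)" using cc by (simp add: concave_on_def)
  have "((\<lambda>x. - K x) has_real_derivative - d) (at z within I)"
    by (rule has_field_derivative_at_within, rule DERIV_minus, rule d)
  from convex_on_imp_above_tangent[OF cv I this] show ?thesis by (simp add: algebra_simps)
qed

lemma concave_on_continuous_on:
  fixes K :: "real \<Rightarrow> real"
  assumes "concave_on S K" "open S"
  shows "continuous_on S K"
proof -
  have "convex_on S (\<lambda>x. - K x)" using assms(1) by (simp add: concave_on_def)
  from convex_on_continuous[OF assms(2) this] have "continuous_on S (\<lambda>x. - K x)" .
  from continuous_on_minus[OF this] show ?thesis by simp
qed

section \<open>Consequences of (PM_c)\<close>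

lemma PM_differentiable_points_dense:
  fixes K :: "real \<Rightarrow> real"
  assumes pm: "PM c K" and ab: "0 \<le> \<alpha>" "\<alpha> < \<beta>" "\<beta> \<le> 1"
  shows "\<exists>q d1 d2. \<alpha> < q \<and> q < \<beta> \<and> (K has_real_derivative d1) (at q) \<and>
           (K has_real_derivative d2) (at (q - 1)) \<and> c \<le> d1 - d2"
proof (rule ccontr)
  assume none: "\<not> ?thesis"
  from pm obtain N where N: "{x \<in> space lborel. \<not> (x \<in> {0<..<1} \<longrightarrow>
        (\<exists>d1 d2. (K has_real_derivative d1) (at x) \<and> (K has_real_derivative d2) (at (x - 1)) \<and> c \<le> d1 - d2))} \<subseteq> N"
      "emeasure lborel N = 0" "N \<in> sets lborel"
    unfolding PM_def by (erule AE_E)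
  have "{\<alpha><..<\<beta>} \<subseteq> N"
  proof
    fix x assume x: "x \<in> {\<alpha><..<\<beta>}"
    then have "x \<in> {0<..<1}" using ab by auto
    with x none N(1) show "x \<in> N" by auto
  qed
  then have "emeasure lborel {\<alpha><..<\<beta>} \<le> emeasure lborel N" by (rule emeasure_mono) (use N in auto)
  then show False using N(2) ab by simp
qed

text \<open>In a partition of \<open>[q, q']\<close> with mesh below \<open>h\<close> whose points carry decreasing slopes \<open>d\<close>,
  the local errors \<open>(q' - q) (d - d')\<close> add up to at most \<open>h\<close> times the total drop of the slopes.\<close>

lemma dense_steps_chain_bound:
  fixes \<psi> :: "real \<Rightarrow> real"
  assumes dense: "\<And>q d q' d' \<alpha> \<beta>. P q d \<Longrightarrow> P q' d' \<Longrightarrow> q \<le> \<alpha> \<Longrightarrow> \<alpha> < \<beta> \<Longrightarrow> \<beta> \<le> q' \<Longrightarrow>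
        \<exists>r e. \<alpha> < r \<and> r < \<beta> \<and> P r e"
    and step: "\<And>q d q' d'. P q d \<Longrightarrow> P q' d' \<Longrightarrow> q < q' \<Longrightarrow>
        d' \<le> d \<and> - ((q' - q) * (d - d')) \<le> \<psi> q' - \<psi> q"
    and h: "h > 0"
  shows "P q d \<Longrightarrow> P q' d' \<Longrightarrow> q < q' \<Longrightarrow> q' - q < real m * h \<Longrightarrow> - (h * (d - d')) \<le> \<psi> q' - \<psi> q"
proof (induction m arbitrary: q d)
  case 0
  then show ?case by simp
next
  case (Suc m)
  note g = Suc.prems(1,2) and qq = Suc.prems(3)
  from step[OF g qq] have dd: "d' \<le> d" and st: "- ((q' - q) * (d - d')) \<le> \<psi> q' - \<psi> q" by auto
  show ?case
  proof (cases "q' - q < h")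
    case True
    then have "(q' - q) * (d - d') \<le> h * (d - d')" using dd by (intro mult_right_mono) auto
    then show ?thesis using st by linarith
  next
    case False
    with Suc.prems(4) h have mh: "0 < real m * h" by (simp add: algebra_simps)
    have "max q (q' - real m * h) < min (q + h) q'"
      using qq mh Suc.prems(4) h by (auto simp: algebra_simps)
    then obtain r e where r: "max q (q' - real m * h) < r" "r < min (q + h) q'" "P r e"
      using dense[OF g, of "max q (q' - real m * h)" "min (q + h) q'"] by auto
    have IH: "- (h * (e - d')) \<le> \<psi> q' - \<psi> r" using Suc.IH[OF r(3) g(2)] r by auto
    from step[OF g(1) r(3)] r have ed: "e \<le> d" and sr: "- ((r - q) * (d - e)) \<le> \<psi> r - \<psi> q" by auto
    have "(r - q) * (d - e) \<le> h * (d - e)" using r ed by (intro mult_right_mono) auto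
    then show ?thesis using IH sr by (simp add: algebra_simps)
  qed
qed

lemma dense_steps_monotone:
  fixes \<psi> :: "real \<Rightarrow> real"
  assumes dense: "\<And>q d q' d' \<alpha> \<beta>. P q d \<Longrightarrow> P q' d' \<Longrightarrow> q \<le> \<alpha> \<Longrightarrow> \<alpha> < \<beta> \<Longrightarrow> \<beta> \<le> q' \<Longrightarrow>
        \<exists>r e. \<alpha> < r \<and> r < \<beta> \<and> P r e"
    and step: "\<And>q d q' d'. P q d \<Longrightarrow> P q' d' \<Longrightarrow> q < q' \<Longrightarrow>
        d' \<le> d \<and> - ((q' - q) * (d - d')) \<le> \<psi> q' - \<psi> q"
    and g: "P q d" "P q' d'" and qq: "q < q'"
  shows "\<psi> q \<le> \<psi> q'"
proof -
  have dd: "d' \<le> d" using step[OF g qq] by simp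
  have "\<psi> q - \<psi> q' \<le> 0 + e" if e: "e > 0" for e
  proof -
    define h where "h = e / (d - d' + 1)"
    have h: "h > 0" using e dd by (simp add: h_def)
    obtain m :: nat where "(q' - q) / h < real m" using reals_Archimedean2 by blast
    then have "q' - q < real m * h" using h by (simp add: divide_less_eq mult.commute)
    from dense_steps_chain_bound[OF dense step h g qq this]
    have "- (h * (d - d')) \<le> \<psi> q' - \<psi> q" .
    moreover have "h * (d - d') \<le> e"
    proof -
      have "h * (d - d') \<le> h * (d - d' + 1)" using h by simp
      also have "\<dots> = e" using dd by (simp add: h_def)
      finally show ?thesis .
    qed
    ultimately show ?thesis by linarith
  qed
  then have "\<psi> q - \<psi> q' \<le> 0" by (rule field_le_epsilon)
  then show ?thesis by simp
qed

lemma continuous_le_of_dense_le: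
  fixes \<psi> :: "real \<Rightarrow> real"
  assumes cont: "isCont \<psi> s1" "isCont \<psi> s2" and s: "s1 < s2"
    and dense: "\<And>\<alpha> \<beta>. s1 \<le> \<alpha> \<Longrightarrow> \<alpha> < \<beta> \<Longrightarrow> \<beta> \<le> s2 \<Longrightarrow> \<exists>q\<in>G. \<alpha> < q \<and> q < \<beta>"
    and mono: "\<And>q q'. q \<in> G \<Longrightarrow> q' \<in> G \<Longrightarrow> q < q' \<Longrightarrow> \<psi> q \<le> \<psi> q'"
  shows "\<psi> s1 \<le> \<psi> s2"
proof (rule ccontr)
  assume "\<not> ?thesis"
  define e where "e = (\<psi> s1 - \<psi> s2) / 2"
  have e: "e > 0" using \<open>\<not> \<psi> s1 \<le> \<psi> s2\<close> by (simp add: e_def)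
  obtain d1 where d1: "d1 > 0" "\<And>x. dist x s1 < d1 \<Longrightarrow> dist (\<psi> x) (\<psi> s1) < e"
    using cont(1) e unfolding continuous_at_eps_delta by force
  obtain d2 where d2: "d2 > 0" "\<And>x. dist x s2 < d2 \<Longrightarrow> dist (\<psi> x) (\<psi> s2) < e"
    using cont(2) e unfolding continuous_at_eps_delta by force
  define w where "w = min (min d1 d2) ((s2 - s1) / 2)"
  have "w \<le> (s2 - s1) / 2" unfolding w_def by (rule min.cobounded2)
  then have w: "w > 0" "w \<le> d1" "w \<le> d2" "2 * w \<le> s2 - s1" using d1 d2 s by (auto simp: w_def)
  obtain q where q: "q \<in> G" "s1 < q" "q < s1 + w" using dense[of s1 "s1 + w"] s w by auto
  obtain q' where q': "q' \<in> G" "s2 - w < q'" "q' < s2" using dense[of "s2 - w" s2] s w by auto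
  have "\<psi> q \<le> \<psi> q'" using mono[OF q(1) q'(1)] q q' w by linarith
  moreover have "dist (\<psi> q) (\<psi> s1) < e" using d1(2)[of q] q w by (simp add: dist_real_def)
  moreover have "dist (\<psi> q') (\<psi> s2) < e" using d2(2)[of q'] q' w by (simp add: dist_real_def)
  moreover have "\<psi> s1 - \<psi> s2 = 2 * e" by (simp add: e_def)
  ultimately show False unfolding dist_real_def by linarith
qed

lemma concave_tangent_step:
  fixes K :: "real \<Rightarrow> real"
  assumes cr: "concave_on {0<..<1} K" and cl: "concave_on {-1<..<0} K"
    and q: "q \<in> {0<..<1}" and dq: "(K has_real_derivative d) (at (q - 1))"
    and q': "q' \<in> {0<..<1}" and dq': "(K has_real_derivative d') (at (q' - 1))"
    and d1': "(K has_real_derivative d1') (at q')" "c \<le> d1' - d'" and qq: "q < q'"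
  shows "d' \<le> d \<and> - ((q' - q) * (d - d')) \<le> (K q' - K (q' - 1) - c * q') - (K q - K (q - 1) - c * q)"
proof -
  have t1: "K q \<le> K q' + d1' * (q - q')"
    by (rule concave_on_le_tangent[OF cr _ _ q d1'(1)]) (use q' in auto)
  have t2: "K (q' - 1) \<le> K (q - 1) + d * ((q' - 1) - (q - 1))"
    by (rule concave_on_le_tangent[OF cl _ _ _ dq]) (use q q' in auto)
  have t3: "K (q - 1) \<le> K (q' - 1) + d' * ((q - 1) - (q' - 1))"
    by (rule concave_on_le_tangent[OF cl _ _ _ dq']) (use q q' in auto)
  have "0 \<le> (d - d') * (q' - q)" using t2 t3 by (simp add: algebra_simps)
  then have dd: "d' \<le> d" using qq by (simp add: zero_le_mult_iff)
  have "(d' - d) * (q' - q) \<le> (d1' - d - c) * (q' - q)"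
    using d1'(2) qq by (intro mult_right_mono) auto
  with t1 t2 dd show ?thesis by (simp add: algebra_simps)
qed

text \<open>(PM_c) says that \<open>\<psi> s = K s - K (s - 1) - c s\<close> has a.e. nonnegative derivative on (0,1).
  Concavity controls this function between differentiability points via tangent lines, which rules
  out Cantor-type behaviour; hence it is nondecreasing.\<close>

lemma PM_increment_lower_bound:
  fixes K :: "real \<Rightarrow> real"
  assumes cr: "concave_on {0<..<1} K" and cl: "concave_on {-1<..<0} K" and pm: "PM c K"
    and s: "0 < s1" "s1 < s2" "s2 < 1"
  shows "c * (s2 - s1) \<le> (K s2 - K s1) - (K (s2 - 1) - K (s1 - 1))"
proof -
  define good where "good q d \<longleftrightarrow> q \<in> {0<..<1} \<and> (K has_real_derivative d) (at (q - 1)) \<and>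
      (\<exists>d1. (K has_real_derivative d1) (at q) \<and> c \<le> d1 - d)" for q d
  define \<psi> where "\<psi> s = K s - K (s - 1) - c * s" for s
  have dense: "\<exists>r e. \<alpha> < r \<and> r < \<beta> \<and> good r e" if ab: "0 \<le> \<alpha>" "\<alpha> < \<beta>" "\<beta> \<le> 1" for \<alpha> \<beta>
  proof -
    obtain q d1 d2 where "\<alpha> < q" "q < \<beta>" "(K has_real_derivative d1) (at q)"
        "(K has_real_derivative d2) (at (q - 1))" "c \<le> d1 - d2"
      using PM_differentiable_points_dense[OF pm ab] by blast
    then show ?thesis using ab unfolding good_def by (intro exI[of _ q] exI[of _ d2]) auto
  qed
  have step: "d' \<le> d \<and> - ((q' - q) * (d - d')) \<le> \<psi> q' - \<psi> q"
    if g: "good q d" "good q' d'" and qq: "q < q'" for q q' d d'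
    using g qq unfolding good_def \<psi>_def by (elim conjE exE) (rule concave_tangent_step[OF cr cl], assumption+)
  have good_01: "0 \<le> q \<and> q \<le> 1" if "good q d" for q d using that unfolding good_def by auto
  have good_mono: "\<psi> q \<le> \<psi> q'" if g: "good q d" "good q' d'" and qq: "q < q'" for q q' d d'
  proof (rule dense_steps_monotone[OF _ step g qq])
    fix q d q' d' \<alpha> \<beta> assume "good q d" "good q' d'" "q \<le> \<alpha>" "\<alpha> < \<beta>" "\<beta> \<le> q'"
    then show "\<exists>r e. \<alpha> < r \<and> r < \<beta> \<and> good r e" using dense good_01 by (meson order_trans)
  qed
  have cont: "isCont \<psi> s" if "s \<in> {0<..<1}" for s
  proof -
    have "isCont K s" "isCont K (s - 1)"
      using concave_on_continuous_on[OF cr] concave_on_continuous_on[OF cl] that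
      by (simp_all add: continuous_on_eq_continuous_at)
    then have "isCont (\<lambda>x. K (x - 1)) s"
      using continuous_at_compose[of s "\<lambda>x. x - 1" K] by (simp add: o_def)
    with \<open>isCont K s\<close> show ?thesis unfolding \<psi>_def by (intro continuous_intros)
  qed
  have "\<psi> s1 \<le> \<psi> s2"
  proof (rule continuous_le_of_dense_le[OF cont cont s(2), where G = "{q. \<exists>d. good q d}"])
    fix \<alpha> \<beta> assume "s1 \<le> \<alpha>" "\<alpha> < \<beta>" "\<beta> \<le> s2"
    then show "\<exists>q\<in>{q. \<exists>d. good q d}. \<alpha> < q \<and> q < \<beta>" using dense[of \<alpha> \<beta>] s by auto
  qed (use s good_mono in auto)
  then show ?thesis unfolding \<psi>_def by (simp add: algebra_simps)
qed

lemma concave_on_double_difference_abs: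
  fixes K :: "real \<Rightarrow> real"
  assumes cc: "concave_on I K" and tt: "t \<le> t'"
    and I: "t - \<alpha> \<in> I" "t - \<beta> \<in> I" "t' - \<alpha> \<in> I" "t' - \<beta> \<in> I"
  shows "\<bar>(K (t' - \<beta>) - K (t' - \<alpha>)) - (K (t - \<beta>) - K (t - \<alpha>))\<bar>
       = sgn (\<beta> - \<alpha>) * ((K (t' - \<beta>) - K (t' - \<alpha>)) - (K (t - \<beta>) - K (t - \<alpha>)))"
proof (cases \<alpha> \<beta> rule: linorder_cases)
  case less
  have "K ((t' - \<beta>) + (\<beta> - \<alpha>)) - K (t' - \<beta>) \<le> K ((t - \<beta>) + (\<beta> - \<alpha>)) - K (t - \<beta>)"
    by (rule concave_on_increment_antimono[OF cc]) (use less tt I in auto)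
  then show ?thesis using less by simp
next
  case greater
  have "K ((t' - \<alpha>) + (\<alpha> - \<beta>)) - K (t' - \<alpha>) \<le> K ((t - \<alpha>) + (\<alpha> - \<beta>)) - K (t - \<alpha>)"
    by (rule concave_on_increment_antimono[OF cc]) (use greater tt I in auto)
  then show ?thesis using greater by simp
qed simp

lemma PM_double_difference_lower_bound:
  fixes K :: "real \<Rightarrow> real"
  assumes cr: "concave_on {0<..<1} K" and cl: "concave_on {-1<..<0} K" and pm: "PM c K"
    and t: "0 \<le> t0" "tn \<le> 1"
    and In: "tn - \<alpha> \<in> {0<..<1}" "tn - \<beta> \<in> {0<..<1}"
    and I0: "t0 - \<alpha> \<in> {-1<..<0}" "t0 - \<beta> \<in> {-1<..<0}"
  shows "c * \<bar>\<beta> - \<alpha>\<bar> \<le> - sgn (\<beta> - \<alpha>) * ((K (tn - \<beta>) - K (tn - \<alpha>)) - (K (t0 - \<beta>) - K (t0 - \<alpha>)))"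
proof -
  have ordered: "c * (p - q) \<le> (K (tn - q) - K (tn - p)) - (K (t0 - q) - K (t0 - p))"
    if pq: "q < p" and In': "tn - p \<in> {0<..<1}" "tn - q \<in> {0<..<1}"
      and I0': "t0 - p \<in> {-1<..<0}" "t0 - q \<in> {-1<..<0}" for p q
  proof -
    define u d where "u = tn - p" and "d = p - q"
    have d: "d > 0" using pq by (simp add: d_def)
    have ud: "u + d = tn - q" by (simp add: u_def d_def)
    have "c * ((u + d) - u) \<le> (K (u + d) - K u) - (K ((u + d) - 1) - K (u - 1))"
      by (rule PM_increment_lower_bound[OF cr cl pm]) (use In' ud d in \<open>auto simp: u_def\<close>)
    moreover have "K ((t0 - p) + d) - K (t0 - p) \<le> K ((u - 1) + d) - K (u - 1)"
      by (rule concave_on_increment_antimono[OF cl d]) (use In' I0' t ud in \<open>auto simp: u_def d_def\<close>)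
    moreover have "(t0 - p) + d = t0 - q" "(u - 1) + d = (u + d) - 1" by (auto simp: d_def)
    ultimately show ?thesis using ud by (simp add: u_def d_def algebra_simps)
  qed
  show ?thesis
  proof (cases \<alpha> \<beta> rule: linorder_cases)
    case less
    from ordered[of \<alpha> \<beta>] less In I0 show ?thesis by (simp add: algebra_simps)
  next
    case greater
    from ordered[of \<beta> \<alpha>] greater In I0 show ?thesis by (simp add: algebra_simps)
  qed simp
qed

lemma sum_signed_lower_bound:
  fixes \<Delta> s :: "'a \<Rightarrow> real"
  assumes fin: "finite A" and l: "l \<in> A"
    and sg: "\<And>i. i \<in> A \<Longrightarrow> i \<noteq> l \<Longrightarrow> \<bar>\<Delta> i\<bar> = \<sigma> * \<Delta> i"
    and sl: "s l = - \<sigma>" and s1: "\<And>i. i \<in> A \<Longrightarrow> \<bar>s i\<bar> \<le> 1"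
    and tot: "X \<le> - \<sigma> * sum \<Delta> A"
  shows "X \<le> (\<Sum>i\<in>A. s i * \<Delta> i)"
proof -
  have "(\<Sum>i\<in>A-{l}. - (\<sigma> * \<Delta> i)) \<le> (\<Sum>i\<in>A-{l}. s i * \<Delta> i)"
  proof (rule sum_mono)
    fix i assume i: "i \<in> A - {l}"
    have "\<bar>s i * \<Delta> i\<bar> \<le> \<bar>\<Delta> i\<bar>" using s1[of i] i by (simp add: abs_mult mult_left_le_one_le)
    then show "- (\<sigma> * \<Delta> i) \<le> s i * \<Delta> i" using sg[of i] i by (simp add: abs_le_iff)
  qed
  moreover have "(\<Sum>i\<in>A. s i * \<Delta> i) = s l * \<Delta> l + (\<Sum>i\<in>A-{l}. s i * \<Delta> i)"
    by (simp add: sum.remove[OF fin l])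
  moreover have "- \<sigma> * sum \<Delta> A = s l * \<Delta> l + (\<Sum>i\<in>A-{l}. - (\<sigma> * \<Delta> i))"
    using sl by (simp add: sum.remove[OF fin l] sum_negf sum_distrib_left algebra_simps)
  ultimately show ?thesis using tot by linarith
qed

lemma le_of_le_add_mult_eps:
  fixes x y C :: real
  assumes C: "C \<ge> 0" and h: "\<And>e. 0 < e \<Longrightarrow> e \<le> 1 \<Longrightarrow> x \<le> y + C * e"
  shows "x \<le> y"
proof (rule field_le_epsilon)
  fix e :: real assume e: "0 < e"
  define e' where "e' = min 1 (e / (C + 1))"
  have e': "0 < e'" "e' \<le> 1" "C * e' \<le> e"
  proof -
    show "0 < e'" "e' \<le> 1" using e C by (auto simp: e'_def)
    have "C * e' \<le> (C + 1) * (e / (C + 1))"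
      using C \<open>0 < e'\<close> by (intro mult_mono) (auto simp: e'_def)
    also have "\<dots> = e" using C by simp
    finally show "C * e' \<le> e" .
  qed
  from h[OF e'(1,2)] e'(3) show "x \<le> y + e" by linarith
qed

lemma sum_abs_le_card_norm:
  fixes x :: "real ^ 'n"
  shows "(\<Sum>i\<in>UNIV. \<bar>x $ i\<bar>) \<le> real CARD('n) * norm x"
proof -
  have "(\<Sum>i\<in>UNIV. \<bar>x $ i\<bar>) \<le> (\<Sum>i\<in>(UNIV::'n set). norm x)"
    by (rule sum_mono) (rule component_le_norm_cart)
  then show ?thesis by simp
qed

lemma sum_ereal_MInfty:
  fixes f :: "'a \<Rightarrow> ereal"
  assumes "finite A" "i0 \<in> A" "f i0 = -\<infinity>" "\<forall>i\<in>A. f i \<noteq> \<infinity>"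
  shows "sum f A = -\<infinity>"
proof -
  have "sum f A = f i0 + sum f (A - {i0})" using assms by (simp add: sum.remove)
  moreover have "sum f (A - {i0}) \<noteq> \<infinity>" using assms by (simp add: sum_Pinfty)
  ultimately show ?thesis using assms by simp
qed

section \<open>Indices and the extended points \<open>y\<^sub>j\<close>\<close>

lemma sorted_list_of_UNIV:
  shows "length (sorted_list_of_set (UNIV::'n::{finite,linorder} set)) = CARD('n)"
    and "sorted_wrt (<) (sorted_list_of_set (UNIV::'n::{finite,linorder} set))"
    and "set (sorted_list_of_set (UNIV::'n::{finite,linorder} set)) = UNIV"
  by (auto simp: length_sorted_list_of_set strict_sorted_list_of_set set_sorted_list_of_set)

lemma idx_less:
  assumes "k < k'" "k' < CARD('n::{finite,linorder})"
  shows "(idx k :: 'n) < idx k'"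
  unfolding idx_def using sorted_wrt_nth_less[OF sorted_list_of_UNIV(2) assms(1)] assms sorted_list_of_UNIV(1)
  by auto

lemma idx_surj: "\<exists>k < CARD('n::{finite,linorder}). idx k = (i::'n)"
proof -
  have "i \<in> set (sorted_list_of_set (UNIV::'n set))" using sorted_list_of_UNIV(3) by auto
  then show ?thesis unfolding idx_def in_set_conv_nth sorted_list_of_UNIV(1) by auto
qed

lemma idx_less_iff:
  assumes "k < CARD('n::{finite,linorder})" "k' < CARD('n)"
  shows "(idx k :: 'n) < idx k' \<longleftrightarrow> k < k'"
  using idx_less[of k k', OF _ assms(2)] idx_less[of k' k, OF _ assms(1)]
  by (cases k k' rule: linorder_cases) auto

lemma pos_idx:
  assumes k: "k < CARD('n::{finite,linorder})"
  shows "pos (idx k :: 'n) = k"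
proof -
  have "{i::'n. i < idx k} = idx ` {..<k}"
  proof
    show "{i::'n. i < idx k} \<subseteq> idx ` {..<k}"
    proof
      fix i :: 'n assume "i \<in> {i. i < idx k}"
      moreover obtain m where m: "m < CARD('n)" "idx m = i" using idx_surj by blast
      ultimately have "m < k" using idx_less_iff[OF m(1) k] by simp
      then show "i \<in> idx ` {..<k}" using m by auto
    qed
    show "idx ` {..<k} \<subseteq> {i::'n. i < idx k}" using idx_less k by auto
  qed
  moreover have "inj_on (idx :: nat \<Rightarrow> 'n) {..<k}"
    by (rule inj_onI) (metis idx_less_iff k lessThan_iff less_trans not_less_iff_gr_or_eq)
  ultimately show ?thesis unfolding pos_def by (simp add: card_image)
qed

lemma pos_less_card: "pos (i::'n::{finite,linorder}) < CARD('n)"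
  using idx_surj[of i] pos_idx by metis

lemma idx_pos: "idx (pos (i::'n::{finite,linorder})) = i"
  using idx_surj[of i] pos_idx by metis

lemma pos_eq_iff: "pos (i::'n::{finite,linorder}) = pos j \<longleftrightarrow> i = j"
  by (metis idx_pos)

lemma bij_betw_pos: "bij_betw (pos :: 'n::{finite,linorder} \<Rightarrow> nat) UNIV {..<CARD('n)}"
proof (rule bij_betwI')
  fix x y :: 'n
  show "pos x = pos y \<longleftrightarrow> x = y" by (rule pos_eq_iff)
next
  fix x :: 'n
  show "pos x \<in> {..<CARD('n)}" using pos_less_card by simp
next
  fix k assume "k \<in> {..<CARD('n)}"
  then have "k = pos (idx k :: 'n)" by (simp add: pos_idx)
  then show "\<exists>x\<in>UNIV. k = pos (x :: 'n)" by blast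
qed

lemma sum_pos_telescope:
  fixes f :: "nat \<Rightarrow> 'a::ab_group_add"
  shows "(\<Sum>i\<in>(UNIV::'n::{finite,linorder} set). f (pos i + 1) - f (pos i)) = f CARD('n) - f 0"
proof -
  have "(\<Sum>k<CARD('n). f (Suc k) - f k) = (\<Sum>i\<in>(UNIV::'n set). f (Suc (pos i)) - f (pos i))"
    using sum.reindex_bij_betw[OF bij_betw_pos[where 'n = 'n], of "\<lambda>k. f (Suc k) - f k"] by simp
  then show ?thesis by (simp add: sum_lessThan_telescope)
qed

lemma yext_pos: "yext y (pos i + 1) = y $ i"
  unfolding yext_def using pos_less_card[of i] idx_pos[of i] by auto

lemma yext_eq_idx: "1 \<le> j \<Longrightarrow> j \<le> CARD('n) \<Longrightarrow> yext (y :: real ^ 'n::{finite,linorder}) j = y $ idx (j - 1)"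
  unfolding yext_def by auto

lemma yext_strict_mono:
  fixes y :: "real ^ 'n::{finite,linorder}"
  assumes y: "y \<in> S_set" and kk: "k < k'" "k' \<le> CARD('n) + 1"
  shows "yext y k < yext y k'"
proof -
  have y01: "\<And>i. 0 < y $ i \<and> y $ i < 1" and ym: "\<And>i j. i < j \<Longrightarrow> y $ i < y $ j"
    using y unfolding S_set_def by auto
  show ?thesis
  proof (cases "k = 0")
    case True
    then show ?thesis using kk y01 unfolding yext_def by auto
  next
    case False
    show ?thesis
    proof (cases "k' = CARD('n) + 1")
      case True
      then show ?thesis using kk y01 False unfolding yext_def by auto
    next
      case False2: False
      have "idx (k - 1) < (idx (k' - 1) :: 'n)" using kk False False2 by (intro idx_less) auto
      then show ?thesis using kk False False2 ym unfolding yext_def by auto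
    qed
  qed
qed

lemma yext_mono:
  fixes y :: "real ^ 'n::{finite,linorder}"
  assumes y: "y \<in> S_set" and kk: "k \<le> k'" "k' \<le> CARD('n) + 1"
  shows "yext y k \<le> yext y k'"
  using yext_strict_mono[OF y, of k k'] kk by (cases "k = k'") auto

lemma yext_bounds:
  fixes y :: "real ^ 'n::{finite,linorder}"
  assumes y: "y \<in> S_set" and k: "k \<le> CARD('n) + 1"
  shows "0 \<le> yext y k" "yext y k \<le> 1"
  using yext_mono[OF y, of 0 k] yext_mono[OF y, of k "CARD('n) + 1"] k by (auto simp: yext_def)

lemma yext_interval_stable:
  fixes x a :: "real ^ 'n::{finite,linorder}"
  assumes j: "j \<le> CARD('n)" and \<tau>: "\<tau> \<in> {yext x j..yext x (j + 1)}" and ne: "\<forall>i. \<tau> \<noteq> x $ i"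
    and near: "\<forall>i. \<bar>a $ i - x $ i\<bar> < \<bar>\<tau> - x $ i\<bar>"
  shows "\<tau> \<in> {yext a j..yext a (j + 1)}"
proof -
  have moved: "x $ i < \<tau> \<Longrightarrow> a $ i < \<tau>" "\<tau> < x $ i \<Longrightarrow> \<tau> < a $ i" for i
    using near[rule_format, of i] by auto
  have "yext a j \<le> \<tau>"
  proof (cases "j = 0")
    case False
    then have eq: "yext a j = a $ idx (j - 1)" "yext x j = x $ idx (j - 1)"
      using j by (simp_all add: yext_eq_idx)
    then have "x $ idx (j - 1) \<le> \<tau>" using \<tau> by simp
    then have "x $ idx (j - 1) < \<tau>" using ne[rule_format, of "idx (j - 1)"] by simp
    then show ?thesis using moved(1)[of "idx (j - 1)"] eq by simp
  qed (use \<tau> in \<open>simp add: yext_def\<close>)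
  moreover have "\<tau> \<le> yext a (j + 1)"
  proof (cases "j + 1 \<le> CARD('n)")
    case True
    then have eq: "yext a (j + 1) = a $ idx j" "yext x (j + 1) = x $ idx j"
      by (simp_all add: yext_eq_idx)
    then have "\<tau> \<le> x $ idx j" using \<tau> by simp
    then have "\<tau> < x $ idx j" using ne[rule_format, of "idx j"] by simp
    then show ?thesis using moved(2)[of "idx j"] eq by simp
  qed (use \<tau> in \<open>simp add: yext_def\<close>)
  ultimately show ?thesis by simp
qed

definition kernel_dom :: "real set" where
  "kernel_dom = {-1<..<0} \<union> {0<..<1}"

lemma open_kernel_dom: "open kernel_dom"
  unfolding kernel_dom_def by auto

lemma kernel_dom_iff: "s \<in> kernel_dom \<longleftrightarrow> -1 < s \<and> s < 1 \<and> s \<noteq> 0"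
  unfolding kernel_dom_def by auto

lemma Kext_kernel_dom: "s \<in> kernel_dom \<Longrightarrow> Kext K s = ereal (K s)"
  unfolding Kext_def kernel_dom_def by auto

lemma kernel_function_bdd_above:
  assumes "kernel_function K"
  shows "\<exists>M. \<forall>s\<in>kernel_dom. K s \<le> M"
proof -
  obtain M1 M2 where "\<forall>t\<in>{0<..<1}. K t \<le> M1" "\<forall>t\<in>{-1<..<0}. K t \<le> M2"
    using assms concave_on_bdd_above_open_interval[of 0 1 K] concave_on_bdd_above_open_interval[of "-1" 0 K]
    unfolding kernel_function_def by auto
  then have "\<forall>s\<in>kernel_dom. K s \<le> max M1 M2"
    unfolding kernel_dom_def by (metis UnE le_max_iff_disj)
  then show ?thesis ..
qed

lemma kernel_functions_bdd_above:
  fixes K :: "'n::finite \<Rightarrow> real \<Rightarrow> real"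
  assumes "\<And>i. kernel_function (K i)"
  shows "\<exists>M\<ge>0. \<forall>i. \<forall>s\<in>kernel_dom. K i s \<le> M"
proof -
  obtain Mf where Mf: "\<And>i s. s \<in> kernel_dom \<Longrightarrow> K i s \<le> Mf i"
    using kernel_function_bdd_above[OF assms] by (metis (no_types))
  define M where "M = (\<Sum>i\<in>UNIV. \<bar>Mf i\<bar>)"
  have "K i s \<le> M" if "s \<in> kernel_dom" for i s
  proof -
    have "\<bar>Mf i\<bar> \<le> M" unfolding M_def by (rule member_le_sum) auto
    then show ?thesis using Mf[OF that, of i] by linarith
  qed
  moreover have "0 \<le> M" unfolding M_def by (simp add: sum_nonneg)
  ultimately show ?thesis by blast
qed

section \<open>Behaviour of \<open>F\<close> and \<open>m\<^sub>j\<close> near \<open>y\<close>\<close>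

lemma S_set_coord_bounds: "a \<in> S_set \<Longrightarrow> 0 < a $ i \<and> a $ i < 1"
  unfolding S_set_def by auto

lemma diff_in_kernel_dom:
  assumes "a \<in> S_set" "t \<in> {0..1}"
  shows "t - a $ i \<in> kernel_dom \<or> t = a $ i"
  using S_set_coord_bounds[OF assms(1), of i] assms(2) unfolding kernel_dom_iff by auto

lemma tendsto_coord_nhds: "((\<lambda>a. a $ i) \<longlongrightarrow> x $ i) (nhds x)"
  by (intro tendsto_vec_nth) (rule filterlim_ident)

locale phi_setting =
  fixes K :: "'n::{finite,linorder} \<Rightarrow> real \<Rightarrow> real" and J :: "real \<Rightarrow> ereal"
    and c :: real and y :: "real ^ 'n::{finite,linorder}" and MJ MK :: real
  assumes c_pos: "c > 0"
    and kernels: "\<And>i. kernel_function (K i) \<and> singular_kernel (K i) \<and> PM c (K i)"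
    and y_in_Y: "y \<in> Y_set J K"
    and J_le: "\<And>t. t \<in> {0..1} \<Longrightarrow> J t \<le> ereal MJ"
    and MK_nonneg: "MK \<ge> 0" and K_le: "\<And>i s. s \<in> kernel_dom \<Longrightarrow> K i s \<le> MK"
begin

lemma K_concave_pos: "concave_on {0<..<1} (K i)"
  and K_concave_neg: "concave_on {-1<..<0} (K i)"
  using kernels[of i] unfolding kernel_function_def by auto

lemma K_PM: "PM c (K i)"
  using kernels by auto

lemma K_continuous_on: "continuous_on kernel_dom (K i)"
  unfolding kernel_dom_def
  using concave_on_continuous_on[OF K_concave_pos[of i]] concave_on_continuous_on[OF K_concave_neg[of i]]
  by (intro continuous_on_open_Un) auto

lemma isCont_K: "s \<in> kernel_dom \<Longrightarrow> isCont (K i) s"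
  using K_continuous_on[of i] open_kernel_dom by (simp add: continuous_on_eq_continuous_at)

lemma Kext_at_0: "Kext (K i) 0 = -\<infinity>"
  using kernels[of i] unfolding singular_kernel_def by auto

lemma K_small_near_0: "\<exists>\<rho>>0. \<forall>i s. s \<noteq> 0 \<and> \<bar>s\<bar> < \<rho> \<longrightarrow> K i s < R"
proof -
  have "eventually (\<lambda>s. K i s < R) (at 0)" for i
  proof -
    obtain l where l: "((\<lambda>s. ereal (K i s)) \<longlongrightarrow> l) (at_right 0)" "((\<lambda>s. ereal (K i s)) \<longlongrightarrow> l) (at_left 0)"
      using kernels[of i] unfolding kernel_function_def by auto
    have "Kext (K i) 0 = Lim (at_right 0) (\<lambda>s. ereal (K i s))" unfolding Kext_def by simp
    also have "\<dots> = l" by (rule tendsto_Lim[OF _ l(1)]) simp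
    finally have "l = -\<infinity>" using Kext_at_0 by simp
    with l have "((\<lambda>s. ereal (K i s)) \<longlongrightarrow> -\<infinity>) (at_right 0)"
      "((\<lambda>s. ereal (K i s)) \<longlongrightarrow> -\<infinity>) (at_left 0)" by auto
    then have "eventually (\<lambda>s. ereal (K i s) < ereal R) (at_right 0)"
      "eventually (\<lambda>s. ereal (K i s) < ereal R) (at_left 0)"
      unfolding tendsto_MInfty by blast+
    then show ?thesis unfolding eventually_at_split by simp
  qed
  then have "eventually (\<lambda>s. \<forall>i. K i s < R) (at 0)"
    by (rule eventually_all_finite)
  then obtain d where "d > 0" "\<And>s. s \<noteq> 0 \<Longrightarrow> dist s 0 < d \<Longrightarrow> \<forall>i. K i s < R"
    unfolding eventually_at by auto
  then show ?thesis by (intro exI[of _ d]) auto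
qed

lemma Kext_neq_PInf:
  assumes "a \<in> S_set" "t \<in> {0..1}"
  shows "Kext (K i) (t - a $ i) \<noteq> \<infinity>"
  using diff_in_kernel_dom[OF assms, of i] Kext_kernel_dom[of "t - a $ i" "K i"] Kext_at_0[of i] by auto

lemma J_neq_PInf: "t \<in> {0..1} \<Longrightarrow> J t \<noteq> \<infinity>"
  using J_le[of t] by auto

lemma Ffun_eq_real_sum:
  assumes a: "a \<in> S_set" and t: "t \<in> {0..1}" and ne: "\<forall>i. t \<noteq> a $ i"
  shows "Ffun J K a t = J t + ereal (\<Sum>i\<in>UNIV. K i (t - a $ i))"
proof -
  have "\<And>i. Kext (K i) (t - a $ i) = ereal (K i (t - a $ i))"
    using diff_in_kernel_dom[OF a t] ne Kext_kernel_dom by blast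
  then show ?thesis unfolding Ffun_def by simp
qed

lemma Ffun_at_pole:
  assumes a: "a \<in> S_set" and t: "t \<in> {0..1}" and eq: "t = a $ i0"
  shows "Ffun J K a t = -\<infinity>"
proof -
  have "(\<Sum>i\<in>UNIV. Kext (K i) (t - a $ i)) = -\<infinity>"
    by (rule sum_ereal_MInfty[of UNIV i0]) (use eq Kext_at_0 Kext_neq_PInf[OF a t] in auto)
  then show ?thesis unfolding Ffun_def using J_neq_PInf[OF t] by simp
qed

lemma Ffun_le:
  assumes a: "a \<in> S_set" and t: "t \<in> {0..1}"
  shows "Ffun J K a t \<le> ereal (MJ + real CARD('n) * MK)"
proof (cases "\<exists>i. t = a $ i")
  case True
  then show ?thesis using Ffun_at_pole[OF a t] by auto
next
  case False
  then have ne: "\<forall>i. t \<noteq> a $ i" by auto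
  have "(\<Sum>i\<in>UNIV. K i (t - a $ i)) \<le> (\<Sum>i\<in>(UNIV::'n set). MK)"
    by (rule sum_mono) (use diff_in_kernel_dom[OF a t] ne K_le in blast)
  then have "J t + ereal (\<Sum>i\<in>UNIV. K i (t - a $ i)) \<le> ereal MJ + ereal (real CARD('n) * MK)"
    using J_le[OF t] by (intro add_mono) auto
  then show ?thesis using Ffun_eq_real_sum[OF a t ne] by simp
qed

lemma Ffun_le_near_pole:
  assumes a: "a \<in> S_set" and t: "t \<in> {0..1}"
    and R: "\<forall>i s. s \<noteq> 0 \<and> \<bar>s\<bar> < \<rho> \<longrightarrow> K i s < R" and near: "\<bar>t - a $ i0\<bar> < \<rho>"
  shows "Ffun J K a t \<le> ereal (MJ + real CARD('n) * MK + R)"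
proof (cases "\<exists>i. t = a $ i")
  case True
  then show ?thesis using Ffun_at_pole[OF a t] by auto
next
  case False
  then have ne: "\<forall>i. t \<noteq> a $ i" by auto
  have "(\<Sum>i\<in>UNIV. K i (t - a $ i)) \<le> (\<Sum>i\<in>(UNIV::'n set). (if i = i0 then R else 0) + MK)"
  proof (rule sum_mono)
    fix i :: 'n
    show "K i (t - a $ i) \<le> (if i = i0 then R else 0) + MK"
    proof (cases "i = i0")
      case True
      have "K i (t - a $ i) < R" using R near ne True by auto
      then show ?thesis using True MK_nonneg by simp
    next
      case False
      then show ?thesis using diff_in_kernel_dom[OF a t, of i] ne K_le by auto
    qed
  qed
  also have "\<dots> = R + real CARD('n) * MK" by (simp add: sum.distrib)
  finally have "J t + ereal (\<Sum>i\<in>UNIV. K i (t - a $ i)) \<le> ereal MJ + ereal (R + real CARD('n) * MK)"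
    using J_le[OF t] by (intro add_mono) auto
  then show ?thesis using Ffun_eq_real_sum[OF a t ne] by (simp add: algebra_simps)
qed

lemma mval_le:
  assumes a: "a \<in> S_set" and j: "j \<le> CARD('n)"
  shows "mval J K a j \<le> ereal (MJ + real CARD('n) * MK)"
  unfolding mval_def
proof (rule SUP_least)
  fix t assume "t \<in> {yext a j..yext a (j + 1)}"
  then have "t \<in> {0..1}" using yext_bounds[OF a, of j] yext_bounds[OF a, of "j + 1"] j by auto
  then show "Ffun J K a t \<le> ereal (MJ + real CARD('n) * MK)" by (rule Ffun_le[OF a])
qed

lemma y_in_S: "y \<in> S_set"
  using y_in_Y unfolding Y_set_def by auto

lemma eventually_in_S_set: "eventually (\<lambda>a. a \<in> S_set) (nhds y)"
proof -
  have "eventually (\<lambda>a. 0 < a $ i \<and> a $ i < 1) (nhds y)" for i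
    using order_tendstoD(1)[OF tendsto_coord_nhds[of i y], of 0] order_tendstoD(2)[OF tendsto_coord_nhds[of i y], of 1]
      S_set_coord_bounds[OF y_in_S, of i]
    by (auto intro: eventually_conj)
  then have "eventually (\<lambda>a. \<forall>i. 0 < a $ i \<and> a $ i < 1) (nhds y)"
    by (rule eventually_all_finite)
  moreover have "eventually (\<lambda>a. i < j \<longrightarrow> a $ i < a $ j) (nhds y)" for i j
  proof (cases "i < j")
    case True
    have "((\<lambda>a. a $ j - a $ i) \<longlongrightarrow> y $ j - y $ i) (nhds y)"
      by (intro tendsto_diff tendsto_coord_nhds)
    moreover have "0 < y $ j - y $ i" using y_in_S True unfolding S_set_def by auto
    ultimately have "eventually (\<lambda>a. 0 < a $ j - a $ i) (nhds y)" by (rule order_tendstoD(1))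
    then show ?thesis by (rule eventually_mono) simp
  qed simp
  then have "eventually (\<lambda>a. \<forall>i j. i < j \<longrightarrow> a $ i < a $ j) (nhds y)"
    by (intro eventually_all_finite)
  ultimately show ?thesis unfolding S_set_def by (auto elim: eventually_elim2)
qed

lemma eventually_coords_bounded_away:
  "\<exists>\<theta>>0. eventually (\<lambda>a. \<forall>i. \<theta> < a $ i \<and> a $ i < 1 - \<theta>) (nhds y)"
proof -
  define m where "m = Min (range (\<lambda>i. min (y $ i) (1 - y $ i)))"
  have m: "m > 0" unfolding m_def using S_set_coord_bounds[OF y_in_S] by (simp add: Min_gr_iff)
  have my: "m \<le> y $ i" "m \<le> 1 - y $ i" for i
    using Min_le[of "range (\<lambda>i. min (y $ i) (1 - y $ i))" "min (y $ i) (1 - y $ i)"] unfolding m_def by auto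
  have "eventually (\<lambda>a. m/2 < a $ i \<and> a $ i < 1 - m/2) (nhds y)" for i
  proof -
    have "m/2 < y $ i" "y $ i < 1 - m/2" using my[of i] m by auto
    then show ?thesis
      using order_tendstoD(1)[OF tendsto_coord_nhds[of i y], of "m/2"]
        order_tendstoD(2)[OF tendsto_coord_nhds[of i y], of "1 - m/2"]
      by (auto intro: eventually_conj)
  qed
  then have "eventually (\<lambda>a. \<forall>i. m/2 < a $ i \<and> a $ i < 1 - m/2) (nhds y)"
    by (rule eventually_all_finite)
  then show ?thesis using m by (intro exI[of _ "m/2"]) auto
qed

text \<open>Lower semicontinuity of \<open>m\<^sub>j\<close> at \<open>y\<close>: a point \<open>\<tau>\<close> where \<open>F(y,\<cdot>)\<close> is finite stays
  inside the moving interval and away from the moving poles.\<close>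

lemma eventually_mval_ge_single:
  assumes j: "j \<le> CARD('n)"
  shows "\<exists>L. eventually (\<lambda>a. ereal L \<le> mval J K a j) (nhds y)"
proof -
  have m_fin: "mval J K y j \<noteq> -\<infinity>" using y_in_Y j unfolding Y_set_def by auto
  have "\<exists>\<tau>\<in>{yext y j..yext y (j + 1)}. Ffun J K y \<tau> \<noteq> -\<infinity>"
  proof (rule ccontr)
    assume "\<not> ?thesis"
    then have "mval J K y j \<le> -\<infinity>" unfolding mval_def by (intro SUP_least) auto
    then show False using m_fin by simp
  qed
  then obtain \<tau> where \<tau>I: "\<tau> \<in> {yext y j..yext y (j + 1)}" and F\<tau>: "Ffun J K y \<tau> \<noteq> -\<infinity>" ..
  have \<tau>01: "\<tau> \<in> {0..1}" using \<tau>I yext_bounds[OF y_in_S, of j] yext_bounds[OF y_in_S, of "j + 1"] j by auto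
  have ne: "\<forall>i. \<tau> \<noteq> y $ i" using Ffun_at_pole[OF y_in_S \<tau>01] F\<tau> by metis
  define Sy where "Sy = (\<Sum>i\<in>UNIV. K i (\<tau> - y $ i))"
  have "Ffun J K y \<tau> = J \<tau> + ereal Sy" using Ffun_eq_real_sum[OF y_in_S \<tau>01 ne] Sy_def by simp
  then obtain jv where jv: "J \<tau> = ereal jv" using F\<tau> J_neq_PInf[OF \<tau>01] by (cases "J \<tau>") auto
  have "((\<lambda>a. \<Sum>i\<in>UNIV. K i (\<tau> - a $ i)) \<longlongrightarrow> Sy) (nhds y)"
    unfolding Sy_def
  proof (intro tendsto_sum)
    fix i :: 'n
    have "\<tau> - y $ i \<in> kernel_dom" using diff_in_kernel_dom[OF y_in_S \<tau>01, of i] ne by auto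
    moreover have "((\<lambda>a. \<tau> - a $ i) \<longlongrightarrow> \<tau> - y $ i) (nhds y)"
      by (intro tendsto_diff tendsto_const tendsto_coord_nhds)
    ultimately show "((\<lambda>a. K i (\<tau> - a $ i)) \<longlongrightarrow> K i (\<tau> - y $ i)) (nhds y)"
      by (rule isCont_tendsto_compose[OF isCont_K])
  qed
  then have sum_near: "eventually (\<lambda>a. Sy - 1 < (\<Sum>i\<in>UNIV. K i (\<tau> - a $ i))) (nhds y)"
    by (rule order_tendstoD(1)) simp
  have poles_near: "eventually (\<lambda>a. \<forall>i. \<bar>a $ i - y $ i\<bar> < \<bar>\<tau> - y $ i\<bar>) (nhds y)"
  proof (rule eventually_all_finite)
    fix i
    have "\<bar>\<tau> - y $ i\<bar> > 0" using ne by auto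
    from tendstoD[OF tendsto_coord_nhds[of i y] this]
    show "eventually (\<lambda>a. \<bar>a $ i - y $ i\<bar> < \<bar>\<tau> - y $ i\<bar>) (nhds y)"
      by (simp add: dist_real_def)
  qed
  have "eventually (\<lambda>a. ereal (jv + Sy - 1) \<le> mval J K a j) (nhds y)"
    using eventually_in_S_set poles_near sum_near
  proof eventually_elim
    case (elim a)
    then have a: "a \<in> S_set" and near: "\<forall>i. \<bar>a $ i - y $ i\<bar> < \<bar>\<tau> - y $ i\<bar>"
      and sa: "Sy - 1 < (\<Sum>i\<in>UNIV. K i (\<tau> - a $ i))" by auto
    have nea: "\<forall>i. \<tau> \<noteq> a $ i" using near by (metis abs_minus_commute less_irrefl)
    have "\<tau> \<in> {yext a j..yext a (j + 1)}" by (rule yext_interval_stable[OF j \<tau>I ne near])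
    then have "Ffun J K a \<tau> \<le> mval J K a j"
      unfolding mval_def by (rule SUP_upper)
    moreover have "Ffun J K a \<tau> = ereal (jv + (\<Sum>i\<in>UNIV. K i (\<tau> - a $ i)))"
      using Ffun_eq_real_sum[OF a \<tau>01 nea] jv by simp
    ultimately show ?case using sa by (simp add: order_trans[rotated])
  qed
  then show ?thesis by blast
qed

lemma eventually_mval_ge:
  "\<exists>L. eventually (\<lambda>a. \<forall>j\<le>CARD('n). ereal L \<le> mval J K a j) (nhds y)"
proof -
  obtain Lf where Lf: "\<And>j. j \<le> CARD('n) \<Longrightarrow> eventually (\<lambda>a. ereal (Lf j) \<le> mval J K a j) (nhds y)"
    using eventually_mval_ge_single by metis
  define L where "L = Min (Lf ` {..CARD('n)})"
  have "eventually (\<lambda>a. ereal L \<le> mval J K a j) (nhds y)" if "j \<in> {..CARD('n)}" for j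
  proof -
    have le: "ereal L \<le> ereal (Lf j)" using that unfolding L_def by simp
    have "eventually (\<lambda>a. ereal (Lf j) \<le> mval J K a j) (nhds y)" using Lf that by simp
    then show ?thesis by (rule eventually_mono) (rule order_trans[OF le])
  qed
  then have "eventually (\<lambda>a. \<forall>j\<in>{..CARD('n)}. ereal L \<le> mval J K a j) (nhds y)"
    by (intro eventually_ball_finite) auto
  then have "eventually (\<lambda>a. \<forall>j\<le>CARD('n). ereal L \<le> mval J K a j) (nhds y)"
    by (rule eventually_mono) auto
  then show ?thesis ..
qed

end

section \<open>\<open>\<Phi>\<close> on a small ball around \<open>y\<close>\<close>

text \<open>The bound on \<open>K\<^sub>i\<close> near 0 is chosen so that \<open>F(a,t) \<le> L - 2 < m\<^sub>j(a) - 1\<close> whenever \<open>t\<close> is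
  \<open>\<rho>\<close>-close to a pole; hence every \<open>\<epsilon>\<close>-maximiser (\<open>\<epsilon> \<le> 1\<close>) keeps distance \<open>\<rho>\<close> from all poles.\<close>

locale phi_ball = phi_setting K J c y MJ MK
  for K :: "'n::{finite,linorder} \<Rightarrow> real \<Rightarrow> real" and J c and y :: "real ^ 'n::{finite,linorder}" and MJ MK +
  fixes L \<rho> r \<theta> Lip :: real
  assumes mval_ge_L: "\<And>a j. a \<in> ball y r \<Longrightarrow> j \<le> CARD('n) \<Longrightarrow> ereal L \<le> mval J K a j"
    and \<rho>_pos: "\<rho> > 0"
    and K_small: "\<forall>i s. s \<noteq> 0 \<and> \<bar>s\<bar> < \<rho> \<longrightarrow> K i s < L - 2 - MJ - real CARD('n) * MK"
    and r_pos: "r > 0" and r_le: "r \<le> \<rho>/4" and ball_in_S: "\<And>a. a \<in> ball y r \<Longrightarrow> a \<in> S_set"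
    and \<theta>_pos: "\<theta> > 0" and ball_coords: "\<And>a i. a \<in> ball y r \<Longrightarrow> \<theta> < a $ i \<and> a $ i < 1 - \<theta>"
    and K_lipschitz_pos: "\<And>i. Lip-lipschitz_on {\<rho>/4..1-\<theta>} (K i)"
    and K_lipschitz_neg: "\<And>i. Lip-lipschitz_on {-(1-\<theta>)..-(\<rho>/4)} (K i)"
begin

definition mreal :: "real ^ 'n::{finite,linorder} \<Rightarrow> nat \<Rightarrow> real" where
  "mreal a j = real_of_ereal (mval J K a j)"

text \<open>For every \<open>a\<close> in the ball, all 1-maximisers of \<open>F(a,\<cdot>)\<close> on \<open>I\<^sub>j(a)\<close> lie in
  \<open>[win_lo j, win_hi j] \<subseteq> I\<^sub>j(a)\<close>.\<close>

definition win_lo :: "nat \<Rightarrow> real" where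
  "win_lo j = (if j = 0 then 0 else yext y j + \<rho>/2)"

definition win_hi :: "nat \<Rightarrow> real" where
  "win_hi j = (if j = CARD('n) then 1 else yext y (j + 1) - \<rho>/2)"

definition kernel_gap :: "real ^ 'n::{finite,linorder} \<Rightarrow> real ^ 'n::{finite,linorder} \<Rightarrow> 'n::{finite,linorder} \<Rightarrow> real \<Rightarrow> real" where
  "kernel_gap a b l t = K l (t - b $ l) - K l (t - a $ l)"

definition D :: "real ^ 'n::{finite,linorder} \<Rightarrow> real ^ 'n::{finite,linorder} \<Rightarrow> real \<Rightarrow> real" where
  "D a b t = (\<Sum>l\<in>UNIV. kernel_gap a b l t)"

lemma Lip_nonneg: "Lip \<ge> 0"
  using lipschitz_on_nonneg[OF K_lipschitz_pos] .

lemma coord_dist_lt: "a \<in> ball y r \<Longrightarrow> \<bar>a $ i - y $ i\<bar> < r"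
  using component_le_norm_cart[of "y - a" i] by (simp add: dist_norm abs_minus_commute)

lemma mval_eq_mreal:
  assumes a: "a \<in> ball y r" and j: "j \<le> CARD('n)"
  shows "mval J K a j = ereal (mreal a j)" and "L \<le> mreal a j"
proof -
  have lo: "ereal L \<le> mval J K a j" by (rule mval_ge_L[OF a j])
  moreover have "mval J K a j \<le> ereal (MJ + real CARD('n) * MK)" by (rule mval_le[OF ball_in_S[OF a] j])
  ultimately have "\<bar>mval J K a j\<bar> \<noteq> \<infinity>" by auto
  then show eq: "mval J K a j = ereal (mreal a j)" unfolding mreal_def by (simp add: ereal_real')
  show "L \<le> mreal a j" using lo unfolding eq by simp
qed

lemma window_subset_01:
  assumes j: "j \<le> CARD('n)" and t: "t \<in> {win_lo j..win_hi j}"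
  shows "t \<in> {0..1}"
  using t yext_bounds[OF y_in_S, of j] yext_bounds[OF y_in_S, of "j + 1"] j \<rho>_pos
  by (auto simp: win_lo_def win_hi_def split: if_splits)

lemma window_right_of_pole:
  assumes j: "j \<le> CARD('n)" and t: "t \<in> {win_lo j..win_hi j}" and p: "pos i < j"
  shows "\<rho>/2 \<le> t - y $ i"
proof -
  have "y $ i = yext y (pos i + 1)" by (rule yext_pos[symmetric])
  also have "\<dots> \<le> yext y j" by (rule yext_mono[OF y_in_S]) (use p j in auto)
  finally show ?thesis using t p by (auto simp: win_lo_def)
qed

lemma window_left_of_pole:
  assumes j: "j \<le> CARD('n)" and t: "t \<in> {win_lo j..win_hi j}" and p: "j \<le> pos i"
  shows "\<rho>/2 \<le> y $ i - t"
proof -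
  have "yext y (j + 1) \<le> yext y (pos i + 1)"
    by (rule yext_mono[OF y_in_S]) (use p pos_less_card[of i] in auto)
  also have "\<dots> = y $ i" by (rule yext_pos)
  finally show ?thesis using t p pos_less_card[of i] by (auto simp: win_hi_def)
qed

lemma window_subset_interval:
  assumes j: "j \<le> CARD('n)" and t: "t \<in> {win_lo j..win_hi j}" and b: "b \<in> ball y r"
  shows "t \<in> {yext b j..yext b (j + 1)}"
proof -
  have "yext b j \<le> t"
  proof (cases "j = 0")
    case False
    then have "yext b j = b $ idx (j - 1)" "yext y j = y $ idx (j - 1)"
      using j by (simp_all add: yext_eq_idx)
    then show ?thesis using t False coord_dist_lt[OF b, of "idx (j - 1)"] r_le \<rho>_pos
      by (auto simp: win_lo_def)
  qed (use window_subset_01[OF j t] in \<open>simp add: yext_def\<close>)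
  moreover have "t \<le> yext b (j + 1)"
  proof (cases "j = CARD('n)")
    case False
    then have "yext b (j + 1) = b $ idx j" "yext y (j + 1) = y $ idx j"
      using j by (simp_all add: yext_eq_idx)
    then show ?thesis using t False coord_dist_lt[OF b, of "idx j"] r_le \<rho>_pos
      by (auto simp: win_hi_def)
  qed (use window_subset_01[OF j t] in \<open>simp add: yext_def\<close>)
  ultimately show ?thesis by simp
qed

lemma window_diff_pos:
  assumes "j \<le> CARD('n)" "t \<in> {win_lo j..win_hi j}" "b \<in> ball y r" "pos i < j"
  shows "t - b $ i \<in> {\<rho>/4..1-\<theta>}"
proof -
  have "\<rho>/2 \<le> t - y $ i" by (rule window_right_of_pole[OF assms(1,2,4)])
  moreover have "\<bar>b $ i - y $ i\<bar> < r" by (rule coord_dist_lt[OF assms(3)])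
  moreover have "\<theta> < b $ i" using ball_coords[OF assms(3)] by blast
  moreover have "t \<le> 1" using window_subset_01[OF assms(1,2)] by simp
  ultimately show ?thesis using r_le unfolding atLeastAtMost_iff abs_less_iff by linarith
qed

lemma window_diff_neg:
  assumes "j \<le> CARD('n)" "t \<in> {win_lo j..win_hi j}" "b \<in> ball y r" "j \<le> pos i"
  shows "t - b $ i \<in> {-(1-\<theta>)..-(\<rho>/4)}"
proof -
  have "\<rho>/2 \<le> y $ i - t" by (rule window_left_of_pole[OF assms(1,2,4)])
  moreover have "\<bar>b $ i - y $ i\<bar> < r" by (rule coord_dist_lt[OF assms(3)])
  moreover have "b $ i < 1 - \<theta>" using ball_coords[OF assms(3)] by blast
  moreover have "0 \<le> t" using window_subset_01[OF assms(1,2)] by simp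
  ultimately show ?thesis using r_le unfolding atLeastAtMost_iff abs_less_iff by linarith
qed

lemma Icc_pos_subset: "{\<rho>/4..1-\<theta>} \<subseteq> {0<..<1}"
  using \<rho>_pos \<theta>_pos by auto

lemma Icc_neg_subset: "{-(1-\<theta>)..-(\<rho>/4)} \<subseteq> {-1<..<0}"
  using \<rho>_pos \<theta>_pos by auto

lemma window_diff_in_pos_unit:
  "j \<le> CARD('n) \<Longrightarrow> t \<in> {win_lo j..win_hi j} \<Longrightarrow> b \<in> ball y r \<Longrightarrow> pos i < j \<Longrightarrow>
    t - b $ i \<in> {0<..<1}"
  using window_diff_pos Icc_pos_subset by blast

lemma window_diff_in_neg_unit:
  "j \<le> CARD('n) \<Longrightarrow> t \<in> {win_lo j..win_hi j} \<Longrightarrow> b \<in> ball y r \<Longrightarrow> j \<le> pos i \<Longrightarrow>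
    t - b $ i \<in> {-1<..<0}"
  using window_diff_neg Icc_neg_subset by blast

lemma window_diff_in_kernel_dom:
  assumes "j \<le> CARD('n)" "t \<in> {win_lo j..win_hi j}" "b \<in> ball y r"
  shows "t - b $ i \<in> kernel_dom"
  using window_diff_in_pos_unit[OF assms, of i] window_diff_in_neg_unit[OF assms, of i]
  unfolding kernel_dom_def by (cases "pos i < j") auto

lemma Ffun_window:
  assumes j: "j \<le> CARD('n)" and t: "t \<in> {win_lo j..win_hi j}" and b: "b \<in> ball y r"
  shows "Ffun J K b t = J t + ereal (\<Sum>i\<in>UNIV. K i (t - b $ i))"
  using window_diff_in_kernel_dom[OF j t b]
  by (intro Ffun_eq_real_sum[OF ball_in_S[OF b] window_subset_01[OF j t]]) (auto simp: kernel_dom_iff)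

lemma far_from_poles_if_large:
  assumes a: "a \<in> ball y r" and t: "t \<in> {0..1}" and big: "ereal (L - 1) < Ffun J K a t"
  shows "\<rho> \<le> \<bar>t - a $ i\<bar>"
proof (rule ccontr)
  assume "\<not> ?thesis"
  then have "\<bar>t - a $ i\<bar> < \<rho>" by simp
  from Ffun_le_near_pole[OF ball_in_S[OF a] t K_small this] have "Ffun J K a t \<le> ereal (L - 2)" by simp
  from less_le_trans[OF big this] show False by simp
qed

lemma far_from_poles_in_window:
  assumes a: "a \<in> ball y r" and j: "j \<le> CARD('n)" and tI: "t \<in> {yext a j..yext a (j + 1)}"
    and far: "\<And>i. \<rho> \<le> \<bar>t - a $ i\<bar>"
  shows "t \<in> {win_lo j..win_hi j}"
proof -
  have t01: "0 \<le> t" "t \<le> 1"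
    using tI yext_bounds[OF ball_in_S[OF a], of j] yext_bounds[OF ball_in_S[OF a], of "j + 1"] j by auto
  have "win_lo j \<le> t"
  proof (cases "j = 0")
    case False
    define i where "i = (idx (j - 1) :: 'n)"
    have e: "yext a j = a $ i" "yext y j = y $ i" using False j by (simp_all add: yext_eq_idx i_def)
    then have "a $ i + \<rho> \<le> t" using tI far[of i] by auto
    moreover have "y $ i - r < a $ i" using coord_dist_lt[OF a, of i] by auto
    ultimately show ?thesis using False e r_le \<rho>_pos by (simp add: win_lo_def)
  qed (use t01 in \<open>simp add: win_lo_def\<close>)
  moreover have "t \<le> win_hi j"
  proof (cases "j = CARD('n)")
    case False
    define i where "i = (idx j :: 'n)"
    have e: "yext a (j + 1) = a $ i" "yext y (j + 1) = y $ i"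
      using False j by (simp_all add: yext_eq_idx i_def)
    then have "t + \<rho> \<le> a $ i" using tI far[of i] by auto
    moreover have "a $ i < y $ i + r" using coord_dist_lt[OF a, of i] by auto
    ultimately show ?thesis using False e r_le \<rho>_pos by (simp add: win_hi_def)
  qed (use t01 in \<open>simp add: win_hi_def\<close>)
  ultimately show ?thesis by simp
qed

lemma near_maximiser_in_window:
  assumes a: "a \<in> ball y r" and j: "j \<le> CARD('n)" and e: "0 < \<epsilon>" "\<epsilon> \<le> 1"
  shows "\<exists>t\<in>{win_lo j..win_hi j}. \<exists>jt. J t = ereal jt \<and> mreal a j - \<epsilon> < jt + (\<Sum>i\<in>UNIV. K i (t - a $ i))"
proof -
  note m = mval_eq_mreal[OF a j]
  have "ereal (mreal a j - \<epsilon>) < mval J K a j" using m e by simp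
  then obtain t where tI: "t \<in> {yext a j..yext a (j + 1)}" and tF: "ereal (mreal a j - \<epsilon>) < Ffun J K a t"
    unfolding mval_def less_SUP_iff by blast
  have a_S: "a \<in> S_set" by (rule ball_in_S[OF a])
  have t01: "t \<in> {0..1}" using tI yext_bounds[OF a_S, of j] yext_bounds[OF a_S, of "j + 1"] j by auto
  have big: "ereal (L - 1) < Ffun J K a t"
    using m(2) e by (intro le_less_trans[OF _ tF]) simp
  have far: "\<rho> \<le> \<bar>t - a $ i\<bar>" for i by (rule far_from_poles_if_large[OF a t01 big])
  then have "\<forall>i. t \<noteq> a $ i" using \<rho>_pos by (metis abs_zero diff_self not_le)
  then have Fa: "Ffun J K a t = J t + ereal (\<Sum>i\<in>UNIV. K i (t - a $ i))"
    by (rule Ffun_eq_real_sum[OF a_S t01])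
  with big obtain jt where jt: "J t = ereal jt" using J_neq_PInf[OF t01] by (cases "J t") auto
  have "mreal a j - \<epsilon> < jt + (\<Sum>i\<in>UNIV. K i (t - a $ i))" using tF Fa jt by simp
  with jt far_from_poles_in_window[OF a j tI far] show ?thesis by blast
qed

lemma mreal_diff_ge_D:
  assumes a: "a \<in> ball y r" and b: "b \<in> ball y r" and j: "j \<le> CARD('n)" and e: "0 < \<epsilon>" "\<epsilon> \<le> 1"
  shows "\<exists>t\<in>{win_lo j..win_hi j}. D a b t - \<epsilon> \<le> mreal b j - mreal a j"
proof -
  obtain t jt where t: "t \<in> {win_lo j..win_hi j}" and jt: "J t = ereal jt"
    and lt: "mreal a j - \<epsilon> < jt + (\<Sum>i\<in>UNIV. K i (t - a $ i))"
    using near_maximiser_in_window[OF a j e] by blast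
  have "Ffun J K b t \<le> mval J K b j"
    unfolding mval_def by (rule SUP_upper) (rule window_subset_interval[OF j t b])
  then have "jt + (\<Sum>i\<in>UNIV. K i (t - b $ i)) \<le> mreal b j"
    using Ffun_window[OF j t b] jt mval_eq_mreal(1)[OF b j] by simp
  moreover have "D a b t = (\<Sum>i\<in>UNIV. K i (t - b $ i)) - (\<Sum>i\<in>UNIV. K i (t - a $ i))"
    unfolding D_def kernel_gap_def by (simp add: sum_subtractf)
  ultimately show ?thesis using t lt by (intro bexI[of _ t]) auto
qed

lemma D_swap: "D b a t = - D a b t"
  unfolding D_def kernel_gap_def by (simp add: sum_negf[symmetric])

lemma continuous_on_D:
  assumes a: "a \<in> ball y r" and b: "b \<in> ball y r" and j: "j \<le> CARD('n)"
  shows "continuous_on {win_lo j..win_hi j} (D a b)"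
proof -
  have cont: "continuous_on {win_lo j..win_hi j} (\<lambda>t. K i (t - x $ i))" if x: "x \<in> ball y r" for x i
  proof (rule continuous_on_compose2[OF K_continuous_on[of i]])
    show "(\<lambda>t. t - x $ i) ` {win_lo j..win_hi j} \<subseteq> kernel_dom"
      using window_diff_in_kernel_dom[OF j _ x] by blast
  qed (intro continuous_intros)
  show ?thesis unfolding D_def kernel_gap_def
    by (intro continuous_on_sum continuous_on_diff cont a b)
qed

text \<open>The increment of \<open>m\<^sub>j\<close> is bounded by \<open>D\<close> from both sides (swap \<open>a\<close> and \<open>b\<close>); as
  \<open>D a b\<close> is continuous on the window, it attains a value in between.\<close>

lemma mreal_diff_approx_D:
  assumes a: "a \<in> ball y r" and b: "b \<in> ball y r" and j: "j \<le> CARD('n)" and e: "0 < \<epsilon>" "\<epsilon> \<le> 1"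
  shows "\<exists>t\<in>{win_lo j..win_hi j}. \<bar>mreal b j - mreal a j - D a b t\<bar> \<le> \<epsilon>"
proof -
  define W where "W = {win_lo j..win_hi j}"
  define dM where "dM = mreal b j - mreal a j"
  obtain t1 where t1: "t1 \<in> W" "D a b t1 - \<epsilon> \<le> dM"
    using mreal_diff_ge_D[OF a b j e] unfolding dM_def W_def by blast
  obtain t2 where t2: "t2 \<in> W" "D b a t2 - \<epsilon> \<le> - dM"
    using mreal_diff_ge_D[OF b a j e] unfolding dM_def W_def by auto
  have t2': "dM - \<epsilon> \<le> D a b t2" using t2(2) D_swap[of b a t2] by linarith
  show ?thesis
  proof (cases "dM - \<epsilon> \<le> D a b t1")
    case True
    then show ?thesis using t1 unfolding dM_def W_def by (intro bexI[of _ t1]) auto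
  next
    case False
    have "connected (D a b ` W)"
      unfolding W_def by (rule connected_continuous_image[OF continuous_on_D[OF a b j]]) simp
    from connected_contains_Icc[OF this imageI[OF t1(1)] imageI[OF t2(1)]]
    have "dM - \<epsilon> \<in> D a b ` W" using False t2' by auto
    then obtain t where "t \<in> W" "D a b t = dM - \<epsilon>" by auto
    then show ?thesis using e unfolding dM_def W_def by (intro bexI[of _ t]) auto
  qed
qed

lemma abs_kernel_gap_le:
  assumes a: "a \<in> ball y r" and b: "b \<in> ball y r" and j: "j \<le> CARD('n)"
    and t: "t \<in> {win_lo j..win_hi j}"
  shows "\<bar>kernel_gap a b i t\<bar> \<le> Lip * \<bar>b $ i - a $ i\<bar>"
proof -
  have "Lip-lipschitz_on (if pos i < j then {\<rho>/4..1-\<theta>} else {-(1-\<theta>)..-(\<rho>/4)}) (K i)"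
    using K_lipschitz_pos K_lipschitz_neg by simp
  moreover have "t - b $ i \<in> (if pos i < j then {\<rho>/4..1-\<theta>} else {-(1-\<theta>)..-(\<rho>/4)})"
    "t - a $ i \<in> (if pos i < j then {\<rho>/4..1-\<theta>} else {-(1-\<theta>)..-(\<rho>/4)})"
    using window_diff_pos[OF j t] window_diff_neg[OF j t] a b by auto
  ultimately have "dist (K i (t - b $ i)) (K i (t - a $ i)) \<le> Lip * dist (t - b $ i) (t - a $ i)"
    by (rule lipschitz_onD)
  then show ?thesis unfolding kernel_gap_def dist_real_def by (simp add: abs_minus_commute)
qed

lemma abs_mreal_diff_le:
  assumes a: "a \<in> ball y r" and b: "b \<in> ball y r" and j: "j \<le> CARD('n)"
  shows "\<bar>mreal b j - mreal a j\<bar> \<le> Lip * (\<Sum>i\<in>UNIV. \<bar>b $ i - a $ i\<bar>)"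
proof (rule le_of_le_add_mult_eps[where C = 1])
  fix e :: real assume e: "0 < e" "e \<le> 1"
  obtain t where t: "t \<in> {win_lo j..win_hi j}" "\<bar>mreal b j - mreal a j - D a b t\<bar> \<le> e"
    using mreal_diff_approx_D[OF a b j e] by blast
  have "\<bar>D a b t\<bar> \<le> (\<Sum>i\<in>UNIV. \<bar>kernel_gap a b i t\<bar>)" unfolding D_def by (rule sum_abs)
  also have "\<dots> \<le> (\<Sum>i\<in>UNIV. Lip * \<bar>b $ i - a $ i\<bar>)"
    by (rule sum_mono) (rule abs_kernel_gap_le[OF a b j t(1)])
  finally have "\<bar>D a b t\<bar> \<le> Lip * (\<Sum>i\<in>UNIV. \<bar>b $ i - a $ i\<bar>)" by (simp add: sum_distrib_left)
  then show "\<bar>mreal b j - mreal a j\<bar> \<le> Lip * (\<Sum>i\<in>UNIV. \<bar>b $ i - a $ i\<bar>) + 1 * e"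
    using t(2) by linarith
qed simp

lemma Phi_eq_mreal:
  assumes a: "a \<in> ball y r"
  shows "Phi J K a $ i = mreal a (pos i + 1) - mreal a (pos i)"
  using mval_eq_mreal(1)[OF a, of "pos i + 1"] mval_eq_mreal(1)[OF a, of "pos i"] pos_less_card[of i]
  unfolding Phi_def by simp

lemma Phi_lipschitz_on_ball:
  "(2 * real CARD('n) * real CARD('n) * Lip)-lipschitz_on (ball y r) (Phi J K)"
proof (rule lipschitz_onI)
  fix a b assume a: "a \<in> ball y r" and b: "b \<in> ball y r"
  define S where "S = (\<Sum>i\<in>UNIV. \<bar>b $ i - a $ i\<bar>)"
  have "dist (Phi J K a) (Phi J K b) = norm (Phi J K b - Phi J K a)"
    by (simp add: dist_norm norm_minus_commute)
  also have "\<dots> \<le> (\<Sum>i\<in>UNIV. \<bar>(Phi J K b - Phi J K a) $ i\<bar>)" by (rule norm_le_l1_cart)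
  also have "\<dots> \<le> (\<Sum>i\<in>(UNIV::'n set). 2 * Lip * S)"
  proof (rule sum_mono)
    fix i :: 'n
    have p: "pos i + 1 \<le> CARD('n)" "pos i \<le> CARD('n)" using pos_less_card[of i] by auto
    have "(Phi J K b - Phi J K a) $ i = (mreal b (pos i + 1) - mreal a (pos i + 1)) - (mreal b (pos i) - mreal a (pos i))"
      using Phi_eq_mreal[OF a, of i] Phi_eq_mreal[OF b, of i] by simp
    then show "\<bar>(Phi J K b - Phi J K a) $ i\<bar> \<le> 2 * Lip * S"
      using abs_mreal_diff_le[OF a b p(1)] abs_mreal_diff_le[OF a b p(2)] unfolding S_def by linarith
  qed
  also have "\<dots> = real CARD('n) * (2 * Lip) * S" by simp
  also have "\<dots> \<le> real CARD('n) * (2 * Lip) * (real CARD('n) * norm (b - a))"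
  proof -
    have "S \<le> real CARD('n) * norm (b - a)" unfolding S_def using sum_abs_le_card_norm[of "b - a"] by simp
    then show ?thesis using Lip_nonneg by (simp add: mult_left_mono)
  qed
  also have "\<dots> = (2 * real CARD('n) * real CARD('n) * Lip) * dist a b"
    by (simp add: dist_norm norm_minus_commute)
  finally show "dist (Phi J K a) (Phi J K b) \<le> (2 * real CARD('n) * real CARD('n) * Lip) * dist a b" .
qed (use Lip_nonneg in simp)

text \<open>For \<open>i \<noteq> l\<close> the windows \<open>j = pos i\<close> and \<open>j = pos i + 1\<close> lie on the same side of the pole
  of \<open>K l\<close>, so by concavity the increment of \<open>kernel_gap a b l\<close> between them has the sign of
  \<open>b $ l - a $ l\<close>.\<close>

lemma kernel_gap_increment_sign:
  assumes a: "a \<in> ball y r" and b: "b \<in> ball y r"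
    and tt: "\<And>j. j \<le> CARD('n) \<Longrightarrow> tt j \<in> {win_lo j..win_hi j}" and il: "i \<noteq> l"
  shows "\<bar>kernel_gap a b l (tt (pos i + 1)) - kernel_gap a b l (tt (pos i))\<bar> =
           sgn (b $ l - a $ l) * (kernel_gap a b l (tt (pos i + 1)) - kernel_gap a b l (tt (pos i)))"
proof -
  have posle: "pos i \<le> CARD('n)" "pos i + 1 \<le> CARD('n)" using pos_less_card[of i] by auto
  note t = tt[OF posle(1)] and t' = tt[OF posle(2)]
  have "win_hi (pos i) < win_lo (pos i + 1)"
    using posle \<rho>_pos by (auto simp: win_lo_def win_hi_def)
  then have tle: "tt (pos i) \<le> tt (pos i + 1)" using t t' by auto
  have "pos l \<noteq> pos i" using il by (simp add: pos_eq_iff)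
  then consider "pos l < pos i" | "pos i + 1 \<le> pos l" by linarith
  then show ?thesis
  proof cases
    case 1
    then have 2: "pos l < pos i + 1" by simp
    show ?thesis unfolding kernel_gap_def
      by (rule concave_on_double_difference_abs[OF K_concave_pos tle],
          (rule window_diff_in_pos_unit[OF posle(1) t a 1] window_diff_in_pos_unit[OF posle(1) t b 1]
             window_diff_in_pos_unit[OF posle(2) t' a 2] window_diff_in_pos_unit[OF posle(2) t' b 2])+)
  next
    case 2
    then have 1: "pos i \<le> pos l" by simp
    show ?thesis unfolding kernel_gap_def
      by (rule concave_on_double_difference_abs[OF K_concave_neg tle],
          (rule window_diff_in_neg_unit[OF posle(1) t a 1] window_diff_in_neg_unit[OF posle(1) t b 1]
             window_diff_in_neg_unit[OF posle(2) t' a 2] window_diff_in_neg_unit[OF posle(2) t' b 2])+)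
  qed
qed

lemma kernel_gap_total_increment:
  assumes a: "a \<in> ball y r" and b: "b \<in> ball y r"
    and tt: "\<And>j. j \<le> CARD('n) \<Longrightarrow> tt j \<in> {win_lo j..win_hi j}"
  shows "c * \<bar>b $ l - a $ l\<bar> \<le> - sgn (b $ l - a $ l) * (kernel_gap a b l (tt CARD('n)) - kernel_gap a b l (tt 0))"
  unfolding kernel_gap_def
proof (rule PM_double_difference_lower_bound[OF K_concave_pos K_concave_neg K_PM])
  have n: "CARD('n) \<le> CARD('n)" "0 \<le> CARD('n)" by auto
  note tn = tt[OF n(1)] and t0 = tt[OF n(2)]
  show "0 \<le> tt 0" "tt CARD('n) \<le> 1" using window_subset_01[OF n(2) t0] window_subset_01[OF n(1) tn] by auto
  show "tt CARD('n) - a $ l \<in> {0<..<1}" "tt CARD('n) - b $ l \<in> {0<..<1}"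
    by (rule window_diff_in_pos_unit[OF n(1) tn _ pos_less_card], fact)+
  show "tt 0 - a $ l \<in> {-1<..<0}" "tt 0 - b $ l \<in> {-1<..<0}"
    by (rule window_diff_in_neg_unit[OF n(2) t0], fact, simp)+
qed

lemma kernel_gap_increments_lower_bound:
  assumes a: "a \<in> ball y r" and b: "b \<in> ball y r"
    and tt: "\<And>j. j \<le> CARD('n) \<Longrightarrow> tt j \<in> {win_lo j..win_hi j}"
  shows "c * \<bar>b $ l - a $ l\<bar> \<le> (\<Sum>i\<in>UNIV. - sgn (b $ i - a $ i) *
           (kernel_gap a b l (tt (pos i + 1)) - kernel_gap a b l (tt (pos i))))"
proof (rule sum_signed_lower_bound[where \<sigma> = "sgn (b $ l - a $ l)" and l = l
      and s = "\<lambda>i. - sgn (b $ i - a $ i)"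
      and \<Delta> = "\<lambda>i. kernel_gap a b l (tt (pos i + 1)) - kernel_gap a b l (tt (pos i))"])
  show "\<bar>- sgn (b $ i - a $ i)\<bar> \<le> 1" for i
    by (cases "b $ i - a $ i" rule: linorder_cases) auto
  show "\<bar>kernel_gap a b l (tt (pos i + 1)) - kernel_gap a b l (tt (pos i))\<bar> =
      sgn (b $ l - a $ l) * (kernel_gap a b l (tt (pos i + 1)) - kernel_gap a b l (tt (pos i)))"
    if "i \<noteq> l" for i
    by (rule kernel_gap_increment_sign[OF a b tt that])
  show "c * \<bar>b $ l - a $ l\<bar> \<le> - sgn (b $ l - a $ l) *
      (\<Sum>i\<in>(UNIV::'n set). kernel_gap a b l (tt (pos i + 1)) - kernel_gap a b l (tt (pos i)))"
    unfolding sum_pos_telescope[of "\<lambda>k. kernel_gap a b l (tt k)"]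
    by (rule kernel_gap_total_increment[OF a b tt])
qed auto

lemma D_increments_lower_bound:
  assumes a: "a \<in> ball y r" and b: "b \<in> ball y r"
    and tt: "\<And>j. j \<le> CARD('n) \<Longrightarrow> tt j \<in> {win_lo j..win_hi j}"
  shows "c * (\<Sum>l\<in>UNIV. \<bar>b $ l - a $ l\<bar>)
           \<le> (\<Sum>i\<in>UNIV. - sgn (b $ i - a $ i) * (D a b (tt (pos i + 1)) - D a b (tt (pos i))))"
proof -
  define G where "G l i = - sgn (b $ i - a $ i) * (kernel_gap a b l (tt (pos i + 1)) - kernel_gap a b l (tt (pos i)))"
    for l i
  have "c * (\<Sum>l\<in>UNIV. \<bar>b $ l - a $ l\<bar>) \<le> (\<Sum>l\<in>UNIV. \<Sum>i\<in>UNIV. G l i)"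
    unfolding sum_distrib_left G_def
    by (rule sum_mono) (rule kernel_gap_increments_lower_bound[OF a b tt])
  also have "\<dots> = (\<Sum>i\<in>UNIV. \<Sum>l\<in>UNIV. G l i)" by (rule sum.swap)
  also have "\<dots> = (\<Sum>i\<in>UNIV. - sgn (b $ i - a $ i) * (D a b (tt (pos i + 1)) - D a b (tt (pos i))))"
    unfolding G_def D_def by (simp only: sum_subtractf[symmetric] sum_distrib_left)
  finally show ?thesis .
qed

lemma l1_dist_le_Phi_l1_dist:
  assumes a: "a \<in> ball y r" and b: "b \<in> ball y r"
  shows "c * (\<Sum>l\<in>UNIV. \<bar>b $ l - a $ l\<bar>) \<le> (\<Sum>i\<in>UNIV. \<bar>Phi J K b $ i - Phi J K a $ i\<bar>)"
proof (rule le_of_le_add_mult_eps[where C = "2 * real CARD('n)"])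
  fix \<epsilon> :: real assume e: "0 < \<epsilon>" "\<epsilon> \<le> 1"
  define dM where "dM j = mreal b j - mreal a j" for j
  obtain tt where tt: "\<And>j. j \<le> CARD('n) \<Longrightarrow> tt j \<in> {win_lo j..win_hi j}"
    and approx: "\<And>j. j \<le> CARD('n) \<Longrightarrow> \<bar>dM j - D a b (tt j)\<bar> \<le> \<epsilon>"
    using mreal_diff_approx_D[OF a b _ e] unfolding dM_def by metis
  define s where "s i = - sgn (b $ i - a $ i)" for i
  define \<eta> where "\<eta> j = dM j - D a b (tt j)" for j
  have s1: "\<bar>s i\<bar> \<le> 1" for i unfolding s_def by (cases "b $ i - a $ i" rule: linorder_cases) auto
  have Phi_diff: "Phi J K b $ i - Phi J K a $ i
      = (D a b (tt (pos i + 1)) - D a b (tt (pos i))) + (\<eta> (pos i + 1) - \<eta> (pos i))" for i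
    using Phi_eq_mreal[OF a, of i] Phi_eq_mreal[OF b, of i] unfolding \<eta>_def dM_def by simp
  have err: "- (2 * \<epsilon>) \<le> s i * (\<eta> (pos i + 1) - \<eta> (pos i))" for i
  proof -
    have "\<bar>\<eta> (pos i + 1)\<bar> \<le> \<epsilon>" "\<bar>\<eta> (pos i)\<bar> \<le> \<epsilon>"
      using approx pos_less_card[of i] unfolding \<eta>_def by auto
    moreover have "\<bar>s i * (\<eta> (pos i + 1) - \<eta> (pos i))\<bar> \<le> \<bar>\<eta> (pos i + 1) - \<eta> (pos i)\<bar>"
      using s1[of i] by (simp add: abs_mult mult_left_le_one_le)
    ultimately show ?thesis by linarith
  qed
  have "- (2 * real CARD('n) * \<epsilon>) \<le> (\<Sum>i\<in>UNIV. s i * (\<eta> (pos i + 1) - \<eta> (pos i)))"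
    using sum_mono[of UNIV "\<lambda>_. - (2 * \<epsilon>)" "\<lambda>i. s i * (\<eta> (pos i + 1) - \<eta> (pos i))"] err by simp
  then have "c * (\<Sum>l\<in>UNIV. \<bar>b $ l - a $ l\<bar>) - 2 * real CARD('n) * \<epsilon>
      \<le> (\<Sum>i\<in>UNIV. s i * (D a b (tt (pos i + 1)) - D a b (tt (pos i)))) + (\<Sum>i\<in>UNIV. s i * (\<eta> (pos i + 1) - \<eta> (pos i)))"
    using D_increments_lower_bound[OF a b tt] unfolding s_def by linarith
  also have "\<dots> = (\<Sum>i\<in>UNIV. s i * (Phi J K b $ i - Phi J K a $ i))"
    unfolding Phi_diff sum.distrib[symmetric] by (rule sum.cong) (simp_all add: algebra_simps)
  also have "\<dots> \<le> (\<Sum>i\<in>UNIV. \<bar>Phi J K b $ i - Phi J K a $ i\<bar>)"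
  proof (rule sum_mono)
    fix i
    have "\<bar>s i * (Phi J K b $ i - Phi J K a $ i)\<bar> \<le> \<bar>Phi J K b $ i - Phi J K a $ i\<bar>"
      using s1[of i] by (simp add: abs_mult mult_left_le_one_le)
    then show "s i * (Phi J K b $ i - Phi J K a $ i) \<le> \<bar>Phi J K b $ i - Phi J K a $ i\<bar>" by simp
  qed
  finally show "c * (\<Sum>l\<in>UNIV. \<bar>b $ l - a $ l\<bar>) \<le> (\<Sum>i\<in>UNIV. \<bar>Phi J K b $ i - Phi J K a $ i\<bar>) + 2 * real CARD('n) * \<epsilon>"
    by linarith
qed simp

lemma dist_le_Phi_dist:
  assumes a: "a \<in> ball y r" and b: "b \<in> ball y r"
  shows "dist b a \<le> (real CARD('n) / c) * dist (Phi J K b) (Phi J K a)"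
proof -
  have "c * norm (b - a) \<le> c * (\<Sum>l\<in>UNIV. \<bar>b $ l - a $ l\<bar>)"
    using norm_le_l1_cart[of "b - a"] c_pos by simp
  also have "\<dots> \<le> real CARD('n) * norm (Phi J K b - Phi J K a)"
    using l1_dist_le_Phi_l1_dist[OF a b] sum_abs_le_card_norm[of "Phi J K b - Phi J K a"] by simp
  finally show ?thesis using c_pos by (simp add: dist_norm field_simps)
qed

lemma Phi_local_homeomorphism:
  "\<exists>U V. open U \<and> y \<in> U \<and> U \<subseteq> Y_set J K \<and> open V \<and> Phi J K y \<in> V \<and>
     (\<exists>g. homeomorphism U V (Phi J K) g \<and> (\<exists>L. L-lipschitz_on U (Phi J K)) \<and> (\<exists>L. L-lipschitz_on V g))"
proof -
  let ?U = "ball y r" and ?V = "Phi J K ` ball y r"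
  have UY: "?U \<subseteq> Y_set J K"
    using mval_ge_L ball_in_S unfolding Y_set_def by fastforce
  have cont: "continuous_on ?U (Phi J K)"
    by (rule lipschitz_on_continuous_on[OF Phi_lipschitz_on_ball])
  have inj: "inj_on (Phi J K) ?U"
  proof (rule inj_onI)
    fix a b assume "a \<in> ?U" "b \<in> ?U" "Phi J K a = Phi J K b"
    then show "a = b" using dist_le_Phi_dist[of a b] by simp
  qed
  obtain g where hom: "homeomorphism ?U ?V (Phi J K) g"
    using invariance_of_domain_homeomorphism[OF open_ball cont _ inj] by auto
  have "(real CARD('n) / c)-lipschitz_on ?V g"
  proof (rule lipschitz_onI)
    fix v w assume "v \<in> ?V" "w \<in> ?V"
    then obtain a b where ab: "a \<in> ?U" "b \<in> ?U" "v = Phi J K a" "w = Phi J K b" by auto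
    moreover have "g v = a" "g w = b" using hom ab unfolding homeomorphism_def by auto
    ultimately show "dist (g v) (g w) \<le> (real CARD('n) / c) * dist v w"
      using dist_le_Phi_dist[of b a] by simp
  qed (use c_pos in simp)
  moreover have "open ?V" by (rule invariance_of_domain[OF cont open_ball inj])
  moreover have "y \<in> ?U" "Phi J K y \<in> ?V" using r_pos by auto
  ultimately show ?thesis using UY hom Phi_lipschitz_on_ball open_ball by blast
qed

end

context phi_setting
begin

lemma K_uniformly_lipschitz:
  assumes \<delta>: "0 < \<delta>" and \<theta>: "0 < \<theta>"
  shows "\<exists>Lip. \<forall>i. Lip-lipschitz_on {\<delta>..1-\<theta>} (K i) \<and> Lip-lipschitz_on {-(1-\<theta>)..-\<delta>} (K i)"
proof -
  have "\<exists>L. L-lipschitz_on {\<delta>..1-\<theta>} (K i)" for i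
    by (rule concave_on_lipschitz_on_compact[OF K_concave_pos]) (use \<delta> \<theta> in auto)
  then obtain L1 where L1: "\<And>i. (L1 i)-lipschitz_on {\<delta>..1-\<theta>} (K i)" by metis
  have "\<exists>L. L-lipschitz_on {-(1-\<theta>)..-\<delta>} (K i)" for i
    by (rule concave_on_lipschitz_on_compact[OF K_concave_neg]) (use \<delta> \<theta> in auto)
  then obtain L2 where L2: "\<And>i. (L2 i)-lipschitz_on {-(1-\<theta>)..-\<delta>} (K i)" by metis
  define Lip where "Lip = (\<Sum>i\<in>UNIV. L1 i + L2 i)"
  have "L1 i + L2 i \<le> Lip" for i
    unfolding Lip_def using L1 L2 by (intro member_le_sum add_nonneg_nonneg lipschitz_on_nonneg) auto
  then have "L1 i \<le> Lip" "L2 i \<le> Lip" for i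
    using lipschitz_on_nonneg[OF L1] lipschitz_on_nonneg[OF L2] by (smt (verit))+
  then show ?thesis using L1 L2 by (blast intro: lipschitz_on_mono)
qed

lemma exists_phi_ball: "\<exists>L \<rho> r \<theta> Lip. phi_ball K J c y MJ MK L \<rho> r \<theta> Lip"
proof -
  obtain L where L: "eventually (\<lambda>a. \<forall>j\<le>CARD('n). ereal L \<le> mval J K a j) (nhds y)"
    using eventually_mval_ge by blast
  obtain \<theta> where \<theta>: "\<theta> > 0" "eventually (\<lambda>a. \<forall>i. \<theta> < a $ i \<and> a $ i < 1 - \<theta>) (nhds y)"
    using eventually_coords_bounded_away by blast
  obtain \<rho> where \<rho>: "\<rho> > 0" "\<forall>i s. s \<noteq> 0 \<and> \<bar>s\<bar> < \<rho> \<longrightarrow> K i s < L - 2 - MJ - real CARD('n) * MK"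
    using K_small_near_0 by blast
  obtain Lip where Lip: "\<And>i. Lip-lipschitz_on {\<rho>/4..1-\<theta>} (K i)" "\<And>i. Lip-lipschitz_on {-(1-\<theta>)..-(\<rho>/4)} (K i)"
    using K_uniformly_lipschitz[of "\<rho>/4" \<theta>] \<rho>(1) \<theta>(1) by auto
  have "eventually (\<lambda>a. (\<forall>j\<le>CARD('n). ereal L \<le> mval J K a j) \<and> a \<in> S_set \<and>
      (\<forall>i. \<theta> < a $ i \<and> a $ i < 1 - \<theta>)) (nhds y)"
    using L eventually_in_S_set \<theta>(2) by (auto intro: eventually_conj)
  then obtain r0 where r0: "r0 > 0" "\<And>a. dist a y < r0 \<Longrightarrow> (\<forall>j\<le>CARD('n). ereal L \<le> mval J K a j) \<and>
      a \<in> S_set \<and> (\<forall>i. \<theta> < a $ i \<and> a $ i < 1 - \<theta>)"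
    unfolding eventually_nhds_metric by blast
  define r where "r = min r0 (\<rho>/4)"
  have near: "dist a y < r0" if "a \<in> ball y r" for a
    using that by (simp add: r_def dist_commute)
  have "phi_ball K J c y MJ MK L \<rho> r \<theta> Lip"
  proof (intro phi_ball.intro phi_setting_axioms phi_ball_axioms.intro)
    show "r > 0" "r \<le> \<rho>/4" using r0(1) \<rho>(1) by (auto simp: r_def)
  qed (use \<rho> \<theta>(1) Lip r0(2) near in auto)
  then show ?thesis by blast
qed

end

theorem proposition6p1:
  fixes K :: "'n::{finite,linorder} \<Rightarrow> real \<Rightarrow> real"
    and J :: "real \<Rightarrow> ereal"
    and c :: real
    and y :: "real ^ 'n::{finite,linorder}"
  assumes "c > 0"
    and "\<And>i. kernel_function (K i) \<and> singular_kernel (K i) \<and> PM c (K i)"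
    and "n_field CARD('n) J"
    and "y \<in> Y_set J K"
  shows "\<exists>U V. open U \<and> y \<in> U \<and> U \<subseteq> Y_set J K \<and> open V \<and> Phi J K y \<in> V \<and>
           (\<exists>g. homeomorphism U V (Phi J K) g \<and>
                (\<exists>L. L-lipschitz_on U (Phi J K)) \<and> (\<exists>L. L-lipschitz_on V g))"
proof -
  \<comment> \<open>only the upper bound on \<open>J\<close> is used: finiteness of the \<open>m\<^sub>j\<close> is part of \<open>y \<in> Y\<close>\<close>
  obtain MJ where MJ: "\<forall>t\<in>{0..1}. J t \<le> ereal MJ"
    using assms(3) unfolding n_field_def by auto
  obtain MK where MK: "MK \<ge> 0" "\<forall>i. \<forall>s\<in>kernel_dom. K i s \<le> MK"
    using kernel_functions_bdd_above[of K] assms(2) by blast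
  interpret phi_setting K J c y MJ MK
    using assms MJ MK by unfold_locales auto
  obtain L \<rho> r \<theta> Lip where "phi_ball K J c y MJ MK L \<rho> r \<theta> Lip"
    using exists_phi_ball by blast
  then show ?thesis by (rule phi_ball.Phi_local_homeomorphism)
qed

end
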